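(* Let $R$ be a commutative ring with unit, let $E$ be an $R$-module and $E^*=\mathrm{Hom}_R(E,R)$. Then the quasi-coherent $R$-module associated with $E^*$, i.e. the functor $B\mapsto E^*\otimes_R B$, coincides (via the canonical morphism) with the dual functor $\mathbf{E}^*$ if and only if $E$ is a projective $R$-module of finite type.
   Context: All functors are covariant functors on the category of commutative $R$-algebras. For an $R$-module $M$, $\mathbf{M}$ denotes the functor of $R$-modules $B\mapsto M\otimes_R B$ (a quasi-coherent $R$-module); $\mathbf{R}$ is $B\mapsto B$. For functors of $R$-modules $F,H$, $\mathbf{Hom}_R(F,H)$ is the functor $B\mapsto \mathrm{Hom}_B(F_{|B},H_{|B})$, where $F_{|B}$ is the restriction of $F$ to commutative $B$-algebras, and $F^*:=\mathbf{Hom}_R(F,\mathbf{R})$. Thus $\mathbf{E}^*(B)=\mathrm{Hom}_B(\mathbf{E}_{|B},\mathbf{R}_{|B})$, which is identified with $\mathrm{Hom}_R(E,B)$; the canonical morphism from $B\mapsto E^*\otimes_R B$ to $\mathbf{E}^*$ sends $w\otimes b$ to $e\mapsto w(e)b$. *)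

theory Defs
  imports "HOL-Algebra.Module" "HOL-Algebra.RingHom"
begin

definition dual_mod :: "('r, 'c) ring_scheme \<Rightarrow> ('r, 'e, 'd) module_scheme \<Rightarrow> ('e \<Rightarrow> 'r) set" where
  "dual_mod R E = {w. w \<in> extensional (carrier E) \<and> w \<in> carrier E \<rightarrow> carrier R
      \<and> (\<forall>x\<in>carrier E. \<forall>y\<in>carrier E. w (x \<oplus>\<^bsub>E\<^esub> y) = w x \<oplus>\<^bsub>R\<^esub> w y)
      \<and> (\<forall>a\<in>carrier R. \<forall>x\<in>carrier E. w (a \<odot>\<^bsub>E\<^esub> x) = a \<otimes>\<^bsub>R\<^esub> w x)}"

text \<open>A commutative R-algebra is a commutative ring B with a structure ring
  homomorphism phi : R -> B. Hom_R(E,B) = R-linear maps E -> B (extensional),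
  where r acts on B by multiplication with phi r.\<close>
definition hom_to_alg :: "('r, 'c) ring_scheme \<Rightarrow> ('r, 'e, 'd) module_scheme \<Rightarrow> ('b, 'f) ring_scheme
    \<Rightarrow> ('r \<Rightarrow> 'b) \<Rightarrow> ('e \<Rightarrow> 'b) set" where
  "hom_to_alg R E B phi = {f. f \<in> extensional (carrier E) \<and> f \<in> carrier E \<rightarrow> carrier B
      \<and> (\<forall>x\<in>carrier E. \<forall>y\<in>carrier E. f (x \<oplus>\<^bsub>E\<^esub> y) = f x \<oplus>\<^bsub>B\<^esub> f y)
      \<and> (\<forall>a\<in>carrier R. \<forall>x\<in>carrier E. f (a \<odot>\<^bsub>E\<^esub> x) = phi a \<otimes>\<^bsub>B\<^esub> f x)}"

text \<open>Free abelian group on the set E* x B (finitely supported integer functions).\<close>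
definition tensor_free :: "('r, 'c) ring_scheme \<Rightarrow> ('r, 'e, 'd) module_scheme \<Rightarrow> ('b, 'f) ring_scheme
    \<Rightarrow> ((('e \<Rightarrow> 'r) \<times> 'b) \<Rightarrow> int) set" where
  "tensor_free R E B = {c. finite {p. c p \<noteq> 0} \<and> {p. c p \<noteq> 0} \<subseteq> dual_mod R E \<times> carrier B}"

definition delta :: "'a \<Rightarrow> 'a \<Rightarrow> int" where
  "delta p = (\<lambda>q. if q = p then 1 else 0)"

definition tensor_gens :: "('r, 'c) ring_scheme \<Rightarrow> ('r, 'e, 'd) module_scheme \<Rightarrow> ('b, 'f) ring_scheme
    \<Rightarrow> ('r \<Rightarrow> 'b) \<Rightarrow> ((('e \<Rightarrow> 'r) \<times> 'b) \<Rightarrow> int) set" where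
  "tensor_gens R E B phi =
     {(\<lambda>q. delta (restrict (\<lambda>x. w x \<oplus>\<^bsub>R\<^esub> w' x) (carrier E), b) q - delta (w, b) q - delta (w', b) q)
        | w w' b. w \<in> dual_mod R E \<and> w' \<in> dual_mod R E \<and> b \<in> carrier B}
   \<union> {(\<lambda>q. delta (w, b \<oplus>\<^bsub>B\<^esub> b') q - delta (w, b) q - delta (w, b') q)
        | w b b'. w \<in> dual_mod R E \<and> b \<in> carrier B \<and> b' \<in> carrier B}
   \<union> {(\<lambda>q. delta (restrict (\<lambda>x. a \<otimes>\<^bsub>R\<^esub> w x) (carrier E), b) q - delta (w, phi a \<otimes>\<^bsub>B\<^esub> b) q)
        | a w b. a \<in> carrier R \<and> w \<in> dual_mod R E \<and> b \<in> carrier B}"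

inductive_set tensor_rel :: "('r, 'c) ring_scheme \<Rightarrow> ('r, 'e, 'd) module_scheme \<Rightarrow> ('b, 'f) ring_scheme
    \<Rightarrow> ('r \<Rightarrow> 'b) \<Rightarrow> ((('e \<Rightarrow> 'r) \<times> 'b) \<Rightarrow> int) set"
  for R E B phi where
  zero: "(\<lambda>q. 0) \<in> tensor_rel R E B phi"
| gen: "g \<in> tensor_gens R E B phi \<Longrightarrow> g \<in> tensor_rel R E B phi"
| diff: "x \<in> tensor_rel R E B phi \<Longrightarrow> y \<in> tensor_rel R E B phi
          \<Longrightarrow> (\<lambda>q. x q - y q) \<in> tensor_rel R E B phi"

definition tensor_dual :: "('r, 'c) ring_scheme \<Rightarrow> ('r, 'e, 'd) module_scheme \<Rightarrow> ('b, 'f) ring_scheme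
    \<Rightarrow> ('r \<Rightarrow> 'b) \<Rightarrow> ((('e \<Rightarrow> 'r) \<times> 'b) \<Rightarrow> int) set set" where
  "tensor_dual R E B phi = tensor_free R E B //
     {(c, c'). c \<in> tensor_free R E B \<and> c' \<in> tensor_free R E B
               \<and> (\<lambda>q. c q - c' q) \<in> tensor_rel R E B phi}"

definition canon_rep :: "('r, 'c) ring_scheme \<Rightarrow> ('r, 'e, 'd) module_scheme \<Rightarrow> ('b, 'f) ring_scheme
    \<Rightarrow> ('r \<Rightarrow> 'b) \<Rightarrow> ((('e \<Rightarrow> 'r) \<times> 'b) \<Rightarrow> int) \<Rightarrow> ('e \<Rightarrow> 'b)" where
  "canon_rep R E B phi c = restrict (\<lambda>x. \<Oplus>\<^bsub>B\<^esub>p\<in>{p. c p \<noteq> 0}.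
        add_pow B (c p) (phi (fst p x) \<otimes>\<^bsub>B\<^esub> snd p)) (carrier E)"

definition canon_map :: "('r, 'c) ring_scheme \<Rightarrow> ('r, 'e, 'd) module_scheme \<Rightarrow> ('b, 'f) ring_scheme
    \<Rightarrow> ('r \<Rightarrow> 'b) \<Rightarrow> ((('e \<Rightarrow> 'r) \<times> 'b) \<Rightarrow> int) set \<Rightarrow> ('e \<Rightarrow> 'b)" where
  "canon_map R E B phi X = the_elem (canon_rep R E B phi ` X)"

definition canon_iso :: "('r, 'c) ring_scheme \<Rightarrow> ('r, 'e, 'd) module_scheme \<Rightarrow> ('b, 'f) ring_scheme
    \<Rightarrow> ('r \<Rightarrow> 'b) \<Rightarrow> bool" where
  "canon_iso R E B phi \<longleftrightarrow>
     bij_betw (canon_map R E B phi) (tensor_dual R E B phi) (hom_to_alg R E B phi)"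

definition fin_type :: "('r, 'c) ring_scheme \<Rightarrow> ('r, 'e, 'd) module_scheme \<Rightarrow> bool" where
  "fin_type R E \<longleftrightarrow> (\<exists>A. finite A \<and> A \<subseteq> carrier E \<and>
     (\<forall>x\<in>carrier E. \<exists>c. c \<in> A \<rightarrow> carrier R \<and> x = (\<Oplus>\<^bsub>E\<^esub>a\<in>A. c a \<odot>\<^bsub>E\<^esub> a)))"

definition free_mod :: "('r, 'c) ring_scheme \<Rightarrow> 'i set \<Rightarrow> ('i \<Rightarrow> 'r) set" where
  "free_mod R I = {g. g \<in> extensional I \<and> g \<in> I \<rightarrow> carrier R \<and> finite {i\<in>I. g i \<noteq> \<zero>\<^bsub>R\<^esub>}}"

text \<open>The index set is taken in the type of elements of E (any module is a quotient
  of the free module on its own elements, so this is no restriction).\<close>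
definition projective_mod :: "('r, 'c) ring_scheme \<Rightarrow> ('r, 'e, 'd) module_scheme \<Rightarrow> bool" where
  "projective_mod R E \<longleftrightarrow> (\<exists>(I::'e set) s p.
      s \<in> carrier E \<rightarrow> free_mod R I \<and> p \<in> free_mod R I \<rightarrow> carrier E
    \<and> (\<forall>x\<in>carrier E. \<forall>y\<in>carrier E. s (x \<oplus>\<^bsub>E\<^esub> y) = restrict (\<lambda>i. s x i \<oplus>\<^bsub>R\<^esub> s y i) I)
    \<and> (\<forall>a\<in>carrier R. \<forall>x\<in>carrier E. s (a \<odot>\<^bsub>E\<^esub> x) = restrict (\<lambda>i. a \<otimes>\<^bsub>R\<^esub> s x i) I)
    \<and> (\<forall>g\<in>free_mod R I. \<forall>h\<in>free_mod R I. p (restrict (\<lambda>i. g i \<oplus>\<^bsub>R\<^esub> h i) I) = p g \<oplus>\<^bsub>E\<^esub> p h)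
    \<and> (\<forall>a\<in>carrier R. \<forall>g\<in>free_mod R I. p (restrict (\<lambda>i. a \<otimes>\<^bsub>R\<^esub> g i) I) = a \<odot>\<^bsub>E\<^esub> p g)
    \<and> (\<forall>x\<in>carrier E. p (s x) = x))"

end

theory Submission
  imports Defs
begin

(* If E is projective of finite type it has a dual basis: finitely many w_k in E* and e_k in E
   with x = \<Sum>k. w_k(x) e_k.  An R-linear f : E \<rightarrow> B is then the image of \<Sum>k. w_k \<otimes> f(e_k), and
   the bilinearity relations show that every element of E* \<otimes> B equals the tensor built in this
   way from its own image, so the canonical morphism is bijective.  Conversely, for the trivial
   extension B = R \<ltimes> E the inclusion x \<mapsto> (0, x) is R-linear, hence the image of some
   \<Sum>i. n_i (w_i \<otimes> (r_i, x_i)); comparing second components gives x = \<Sum>i. n_i w_i(x) x_i, a dual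
   basis, and a dual basis exhibits E as a direct summand of a finite free module. *)

lemma additive_finsum:
  assumes G: "abelian_monoid G" and H: "abelian_monoid H"
    and h_closed: "h \<in> carrier G \<rightarrow> carrier H" and h_zero: "h \<zero>\<^bsub>G\<^esub> = \<zero>\<^bsub>H\<^esub>"
    and h_add: "\<And>x y. x \<in> carrier G \<Longrightarrow> y \<in> carrier G \<Longrightarrow> h (x \<oplus>\<^bsub>G\<^esub> y) = h x \<oplus>\<^bsub>H\<^esub> h y"
    and "finite A" "f \<in> A \<rightarrow> carrier G"
  shows "h (\<Oplus>\<^bsub>G\<^esub>a\<in>A. f a) = (\<Oplus>\<^bsub>H\<^esub>a\<in>A. h (f a))"
  using assms(6,7)
proof (induction A rule: finite_induct)
  case empty
  then show ?case using h_zero by (simp add: abelian_monoid.finsum_empty[OF G] abelian_monoid.finsum_empty[OF H])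
next
  case (insert a A)
  then have f: "f a \<in> carrier G" "f \<in> A \<rightarrow> carrier G" by auto
  then have hf: "h (f a) \<in> carrier H" "(\<lambda>a. h (f a)) \<in> A \<rightarrow> carrier H" using h_closed by auto
  have "h (\<Oplus>\<^bsub>G\<^esub>a\<in>insert a A. f a) = h (f a \<oplus>\<^bsub>G\<^esub> (\<Oplus>\<^bsub>G\<^esub>a\<in>A. f a))"
    using insert.hyps f by (simp add: abelian_monoid.finsum_insert[OF G])
  also have "\<dots> = h (f a) \<oplus>\<^bsub>H\<^esub> (\<Oplus>\<^bsub>H\<^esub>a\<in>A. h (f a))"
    using f insert.IH by (simp add: h_add abelian_monoid.finsum_closed[OF G])
  also have "\<dots> = (\<Oplus>\<^bsub>H\<^esub>a\<in>insert a A. h (f a))"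
    using insert.hyps hf by (simp add: abelian_monoid.finsum_insert[OF H])
  finally show ?case .
qed

lemma (in abelian_group) finsum_neg:
  assumes "finite A" "f \<in> A \<rightarrow> carrier G"
  shows "(\<Oplus>i\<in>A. \<ominus> f i) = \<ominus> (\<Oplus>i\<in>A. f i)"
  by (rule additive_finsum[symmetric]) (use assms in \<open>auto simp: abelian_monoid_axioms minus_add\<close>)

lemma (in abelian_group) add_minus_minus_self:
  "u \<in> carrier G \<Longrightarrow> v \<in> carrier G \<Longrightarrow> (u \<oplus> v) \<ominus> u \<ominus> v = \<zero>"
  by (simp add: minus_eq a_comm[of u v] a_assoc r_neg)

lemma (in abelian_group) minus_eq_zero_imp_eq: "u \<in> carrier G \<Longrightarrow> v \<in> carrier G \<Longrightarrow> u \<ominus> v = \<zero> \<Longrightarrow> u = v"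
  by (metis add.inv_closed minus_eq minus_minus minus_equality)

context module
begin

lemma finsum_smult_rdistr:
  assumes "finite A" "f \<in> A \<rightarrow> carrier R" "x \<in> carrier M"
  shows "(\<Oplus>i\<in>A. f i) \<odot>\<^bsub>M\<^esub> x = (\<Oplus>\<^bsub>M\<^esub>i\<in>A. f i \<odot>\<^bsub>M\<^esub> x)"
  by (rule additive_finsum[where h = "\<lambda>a. a \<odot>\<^bsub>M\<^esub> x"])
     (use assms in \<open>auto simp: R.abelian_monoid_axioms M.abelian_monoid_axioms smult_l_distr\<close>)

lemma dual_modD:
  assumes "w \<in> dual_mod R M"
  shows "w \<in> extensional (carrier M)" "\<And>x. x \<in> carrier M \<Longrightarrow> w x \<in> carrier R"
    "\<And>x y. x \<in> carrier M \<Longrightarrow> y \<in> carrier M \<Longrightarrow> w (x \<oplus>\<^bsub>M\<^esub> y) = w x \<oplus> w y"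
    "\<And>a x. a \<in> carrier R \<Longrightarrow> x \<in> carrier M \<Longrightarrow> w (a \<odot>\<^bsub>M\<^esub> x) = a \<otimes> w x"
  using assms unfolding dual_mod_def by auto

lemma dual_mod_zero:
  assumes "w \<in> dual_mod R M"
  shows "w \<zero>\<^bsub>M\<^esub> = \<zero>"
proof -
  have "w \<zero>\<^bsub>M\<^esub> = w (\<zero> \<odot>\<^bsub>M\<^esub> \<zero>\<^bsub>M\<^esub>)" by simp
  also have "\<dots> = \<zero> \<otimes> w \<zero>\<^bsub>M\<^esub>" by (rule dual_modD(4)[OF assms]) simp_all
  also have "\<dots> = \<zero>" using dual_modD(2)[OF assms] by simp
  finally show ?thesis .
qed

lemma dual_mod_finsum:
  assumes "w \<in> dual_mod R M" "finite K" "f \<in> K \<rightarrow> carrier M"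
  shows "w (\<Oplus>\<^bsub>M\<^esub>k\<in>K. f k) = (\<Oplus>k\<in>K. w (f k))"
  by (rule additive_finsum) (use assms dual_modD dual_mod_zero in
      \<open>auto simp: R.abelian_monoid_axioms M.abelian_monoid_axioms\<close>)

lemma dual_mod_zero_closed: "restrict (\<lambda>x. \<zero>) (carrier M) \<in> dual_mod R M"
  unfolding dual_mod_def by auto

lemma dual_mod_add_closed:
  assumes "w \<in> dual_mod R M" "w' \<in> dual_mod R M"
  shows "restrict (\<lambda>x. w x \<oplus> w' x) (carrier M) \<in> dual_mod R M"
  using dual_modD[OF assms(1)] dual_modD[OF assms(2)]
  unfolding dual_mod_def by (auto simp: R.a_ac R.r_distr)

lemma dual_mod_scale_closed:
  assumes "a \<in> carrier R" "w \<in> dual_mod R M"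
  shows "restrict (\<lambda>x. a \<otimes> w x) (carrier M) \<in> dual_mod R M"
  using assms(1) dual_modD[OF assms(2)]
  unfolding dual_mod_def by (auto simp: R.r_distr R.m_lcomm)

lemma dual_mod_add_pow_closed:
  assumes "w \<in> dual_mod R M"
  shows "restrict (\<lambda>x. add_pow R (n::int) (w x)) (carrier M) \<in> dual_mod R M"
  using dual_modD[OF assms]
  unfolding dual_mod_def by (auto simp: R.add.int_pow_distrib R.add_pow_rdistr_int)

lemma dual_mod_finsum_closed:
  assumes "finite K" "\<And>k. k \<in> K \<Longrightarrow> u k \<in> dual_mod R M"
  shows "restrict (\<lambda>x. \<Oplus>k\<in>K. u k x) (carrier M) \<in> dual_mod R M"
  using assms
proof (induction K rule: finite_induct)
  case empty
  then show ?case using dual_mod_zero_closed by (simp add: restrict_def)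
next
  case (insert k K)
  let ?U = "restrict (\<lambda>x. \<Oplus>k\<in>K. u k x) (carrier M)"
  have "restrict (\<lambda>x. \<Oplus>k\<in>insert k K. u k x) (carrier M) = restrict (\<lambda>x. u k x \<oplus> ?U x) (carrier M)"
    using insert.hyps insert.prems dual_modD(2) by (intro restrict_ext) auto
  moreover have "restrict (\<lambda>x. u k x \<oplus> ?U x) (carrier M) \<in> dual_mod R M"
    using insert by (intro dual_mod_add_closed) auto
  ultimately show ?case by (simp only:)
qed

end

section \<open>Dual bases\<close>

definition dual_basis ::
    "('r, 'c) ring_scheme \<Rightarrow> ('r, 'e, 'd) module_scheme \<Rightarrow> 'k set \<Rightarrow> ('k \<Rightarrow> 'e \<Rightarrow> 'r) \<Rightarrow> ('k \<Rightarrow> 'e) \<Rightarrow> bool"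
  where "dual_basis R M K w e \<longleftrightarrow> finite K \<and> (\<forall>k\<in>K. w k \<in> dual_mod R M \<and> e k \<in> carrier M)
     \<and> (\<forall>x\<in>carrier M. x = (\<Oplus>\<^bsub>M\<^esub>k\<in>K. w k x \<odot>\<^bsub>M\<^esub> e k))"

context module
begin

lemma dual_basis_expand_dual:
  assumes "dual_basis R M K w e" "u \<in> dual_mod R M"
  shows "u = restrict (\<lambda>x. \<Oplus>k\<in>K. u (e k) \<otimes> w k x) (carrier M)"
proof (rule extensionalityI[of _ "carrier M"])
  have K: "finite K" and w: "\<And>k x. k \<in> K \<Longrightarrow> x \<in> carrier M \<Longrightarrow> w k x \<in> carrier R"
    and e: "\<And>k. k \<in> K \<Longrightarrow> e k \<in> carrier M"
    and expand: "\<And>x. x \<in> carrier M \<Longrightarrow> x = (\<Oplus>\<^bsub>M\<^esub>k\<in>K. w k x \<odot>\<^bsub>M\<^esub> e k)"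
    using assms(1) dual_modD(2) unfolding dual_basis_def by auto
  show "u \<in> extensional (carrier M)" using dual_modD(1)[OF assms(2)] .
  fix x assume x: "x \<in> carrier M"
  have "u x = u (\<Oplus>\<^bsub>M\<^esub>k\<in>K. w k x \<odot>\<^bsub>M\<^esub> e k)" using expand[OF x] by simp
  also have "\<dots> = (\<Oplus>k\<in>K. u (w k x \<odot>\<^bsub>M\<^esub> e k))"
    using K w e x by (intro dual_mod_finsum[OF assms(2)]) auto
  also have "\<dots> = (\<Oplus>k\<in>K. u (e k) \<otimes> w k x)"
    using w e x dual_modD(2,4)[OF assms(2)] by (intro R.finsum_cong') (auto simp: R.m_comm)
  finally show "u x = restrict (\<lambda>x. \<Oplus>k\<in>K. u (e k) \<otimes> w k x) (carrier M) x" using x by simp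
qed simp

text \<open>projective_mod and fin_type index by elements of M, so basis vectors e k that coincide are
  merged by adding their coordinate forms.\<close>

lemma dual_basis_reindex_by_elements:
  assumes "dual_basis R M K w e"
  shows "\<exists>J W. J \<subseteq> carrier M \<and> dual_basis R M J W id"
proof -
  have K: "finite K" and w: "\<And>k. k \<in> K \<Longrightarrow> w k \<in> dual_mod R M"
    and e: "\<And>k. k \<in> K \<Longrightarrow> e k \<in> carrier M"
    and expand: "\<And>x. x \<in> carrier M \<Longrightarrow> x = (\<Oplus>\<^bsub>M\<^esub>k\<in>K. w k x \<odot>\<^bsub>M\<^esub> e k)"
    using assms unfolding dual_basis_def by auto
  define fib where "fib j = {k \<in> K. e k = j}" for j
  define W where "W j = restrict (\<lambda>x. \<Oplus>k\<in>fib j. w k x) (carrier M)" for j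
  have fib: "finite (fib j)" "fib j \<subseteq> K" for j unfolding fib_def using K by auto
  have "dual_basis R M (e ` K) W id" unfolding dual_basis_def
  proof (intro conjI ballI)
    show "finite (e ` K)" using K by simp
    fix j assume "j \<in> e ` K"
    then show "W j \<in> dual_mod R M" "id j \<in> carrier M"
      unfolding W_def using fib w e by (auto intro!: dual_mod_finsum_closed)
  next
    fix x assume x: "x \<in> carrier M"
    have wx: "\<And>k. k \<in> K \<Longrightarrow> w k x \<in> carrier R" using w dual_modD(2) x by blast
    have "(\<Oplus>\<^bsub>M\<^esub>j\<in>e ` K. W j x \<odot>\<^bsub>M\<^esub> id j) = (\<Oplus>\<^bsub>M\<^esub>j\<in>e ` K. \<Oplus>\<^bsub>M\<^esub>k\<in>fib j. w k x \<odot>\<^bsub>M\<^esub> e k)"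
    proof (rule M.finsum_cong'[OF refl])
      fix j assume "j \<in> e ` K"
      then have "W j x \<odot>\<^bsub>M\<^esub> id j = (\<Oplus>\<^bsub>M\<^esub>k\<in>fib j. w k x \<odot>\<^bsub>M\<^esub> j)"
        unfolding W_def using x fib wx e by (auto intro!: finsum_smult_rdistr)
      also have "\<dots> = (\<Oplus>\<^bsub>M\<^esub>k\<in>fib j. w k x \<odot>\<^bsub>M\<^esub> e k)"
        by (rule M.finsum_cong'[OF refl]) (use wx e in \<open>auto simp: fib_def\<close>)
      finally show "W j x \<odot>\<^bsub>M\<^esub> id j = (\<Oplus>\<^bsub>M\<^esub>k\<in>fib j. w k x \<odot>\<^bsub>M\<^esub> e k)" .
    qed (use wx e in \<open>auto intro!: M.finsum_closed simp: fib_def\<close>)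
    also have "\<dots> = (\<Oplus>\<^bsub>M\<^esub>k\<in>(\<Union>j\<in>e ` K. fib j). w k x \<odot>\<^bsub>M\<^esub> e k)"
      by (rule M.add.finprod_UN_disjoint[symmetric])
         (use K fib wx e in \<open>auto simp: pairwise_def disjnt_def fib_def\<close>)
    also have "(\<Union>j\<in>e ` K. fib j) = K" unfolding fib_def by auto
    finally show "x = (\<Oplus>\<^bsub>M\<^esub>j\<in>e ` K. W j x \<odot>\<^bsub>M\<^esub> id j)" using expand[OF x] by simp
  qed
  moreover have "e ` K \<subseteq> carrier M" using e by auto
  ultimately show ?thesis by blast
qed

lemma dual_basis_imp_fin_type:
  assumes "J \<subseteq> carrier M" "dual_basis R M J W id"
  shows "fin_type R M"
  unfolding fin_type_def
proof (intro exI conjI ballI)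
  fix x assume "x \<in> carrier M"
  then show "(\<lambda>j. W j x) \<in> J \<rightarrow> carrier R" "x = (\<Oplus>\<^bsub>M\<^esub>j\<in>J. W j x \<odot>\<^bsub>M\<^esub> j)"
    using assms(2) dual_modD(2) unfolding dual_basis_def by auto
qed (use assms in \<open>auto simp: dual_basis_def\<close>)

text \<open>The coordinates W j x embed M into the free module on J, and taking linear combinations
  of the j \<in> J is a retraction of this embedding.\<close>

lemma dual_basis_imp_projective:
  assumes JM: "J \<subseteq> carrier M" and db: "dual_basis R M J W id"
  shows "projective_mod R M"
proof -
  have J: "finite J" and W: "\<And>j. j \<in> J \<Longrightarrow> W j \<in> dual_mod R M"
    and expand: "\<And>x. x \<in> carrier M \<Longrightarrow> x = (\<Oplus>\<^bsub>M\<^esub>j\<in>J. W j x \<odot>\<^bsub>M\<^esub> j)"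
    using db unfolding dual_basis_def by auto
  have Wx: "\<And>j x. j \<in> J \<Longrightarrow> x \<in> carrier M \<Longrightarrow> W j x \<in> carrier R" using W dual_modD(2) by blast
  define s where "s x = restrict (\<lambda>j. W j x) J" for x
  define p where "p g = (\<Oplus>\<^bsub>M\<^esub>j\<in>J. g j \<odot>\<^bsub>M\<^esub> j)" for g
  have free: "\<And>g. g \<in> free_mod R J \<Longrightarrow> g \<in> J \<rightarrow> carrier R" unfolding free_mod_def by simp
  show ?thesis unfolding projective_mod_def
  proof (intro exI conjI ballI)
    show "s \<in> carrier M \<rightarrow> free_mod R J" unfolding s_def free_mod_def using Wx J by auto
    show "p \<in> free_mod R J \<rightarrow> carrier M" unfolding p_def using free JM by (auto intro!: M.finsum_closed)
  next
    fix x y assume "x \<in> carrier M" "y \<in> carrier M"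
    then show "s (x \<oplus>\<^bsub>M\<^esub> y) = restrict (\<lambda>i. s x i \<oplus> s y i) J"
      unfolding s_def using W dual_modD(3) by (intro restrict_ext) auto
  next
    fix a x assume "a \<in> carrier R" "x \<in> carrier M"
    then show "s (a \<odot>\<^bsub>M\<^esub> x) = restrict (\<lambda>i. a \<otimes> s x i) J"
      unfolding s_def using W dual_modD(4) by (intro restrict_ext) auto
  next
    fix g h assume "g \<in> free_mod R J" "h \<in> free_mod R J"
    then have g: "g \<in> J \<rightarrow> carrier R" and h: "h \<in> J \<rightarrow> carrier R" using free by auto
    have "p (restrict (\<lambda>i. g i \<oplus> h i) J) = (\<Oplus>\<^bsub>M\<^esub>j\<in>J. g j \<odot>\<^bsub>M\<^esub> j \<oplus>\<^bsub>M\<^esub> h j \<odot>\<^bsub>M\<^esub> j)"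
      unfolding p_def using g h JM by (intro M.finsum_cong') (auto simp: smult_l_distr Pi_iff subset_iff)
    also have "\<dots> = p g \<oplus>\<^bsub>M\<^esub> p h"
      unfolding p_def using g h JM by (intro M.finsum_addf) auto
    finally show "p (restrict (\<lambda>i. g i \<oplus> h i) J) = p g \<oplus>\<^bsub>M\<^esub> p h" .
  next
    fix a g assume a: "a \<in> carrier R" and "g \<in> free_mod R J"
    then have g: "g \<in> J \<rightarrow> carrier R" using free by auto
    have "p (restrict (\<lambda>i. a \<otimes> g i) J) = (\<Oplus>\<^bsub>M\<^esub>j\<in>J. a \<odot>\<^bsub>M\<^esub> (g j \<odot>\<^bsub>M\<^esub> j))"
      unfolding p_def using a g JM by (intro M.finsum_cong') (auto simp: smult_assoc1 Pi_iff subset_iff)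
    also have "\<dots> = a \<odot>\<^bsub>M\<^esub> p g"
      unfolding p_def using a g JM J by (intro finsum_smult_ldistr[symmetric]) auto
    finally show "p (restrict (\<lambda>i. a \<otimes> g i) J) = a \<odot>\<^bsub>M\<^esub> p g" .
  next
    fix x assume x: "x \<in> carrier M"
    have "p (s x) = (\<Oplus>\<^bsub>M\<^esub>j\<in>J. W j x \<odot>\<^bsub>M\<^esub> j)"
      unfolding p_def s_def using Wx x JM by (intro M.finsum_cong') auto
    then show "p (s x) = x" using expand[OF x] by simp
  qed
qed

end

locale free_retract = module R M
  for R :: "('r, 'c) ring_scheme" (structure) and M :: "('r, 'e, 'd) module_scheme" +
  fixes I :: "'i set" and s :: "'e \<Rightarrow> 'i \<Rightarrow> 'r" and p :: "('i \<Rightarrow> 'r) \<Rightarrow> 'e"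
  assumes s_closed: "s \<in> carrier M \<rightarrow> free_mod R I"
    and p_closed: "p \<in> free_mod R I \<rightarrow> carrier M"
    and s_add: "\<And>x y. x \<in> carrier M \<Longrightarrow> y \<in> carrier M \<Longrightarrow> s (x \<oplus>\<^bsub>M\<^esub> y) = restrict (\<lambda>i. s x i \<oplus> s y i) I"
    and s_smult: "\<And>a x. a \<in> carrier R \<Longrightarrow> x \<in> carrier M \<Longrightarrow> s (a \<odot>\<^bsub>M\<^esub> x) = restrict (\<lambda>i. a \<otimes> s x i) I"
    and p_add: "\<And>g h. g \<in> free_mod R I \<Longrightarrow> h \<in> free_mod R I \<Longrightarrow> p (restrict (\<lambda>i. g i \<oplus> h i) I) = p g \<oplus>\<^bsub>M\<^esub> p h"
    and p_smult: "\<And>a g. a \<in> carrier R \<Longrightarrow> g \<in> free_mod R I \<Longrightarrow> p (restrict (\<lambda>i. a \<otimes> g i) I) = a \<odot>\<^bsub>M\<^esub> p g"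
    and p_s: "\<And>x. x \<in> carrier M \<Longrightarrow> p (s x) = x"
begin

lemma free_modI:
  assumes "g \<in> I \<rightarrow> carrier R" "finite S" "\<And>i. i \<in> I \<Longrightarrow> i \<notin> S \<Longrightarrow> g i = \<zero>"
  shows "restrict g I \<in> free_mod R I"
proof -
  have "{i \<in> I. restrict g I i \<noteq> \<zero>} \<subseteq> S" using assms(3) by auto
  then have "finite {i \<in> I. restrict g I i \<noteq> \<zero>}" using assms(2) by (rule finite_subset)
  then show ?thesis unfolding free_mod_def using assms(1) by auto
qed

lemma s_coord_closed: "x \<in> carrier M \<Longrightarrow> i \<in> I \<Longrightarrow> s x i \<in> carrier R"
  using s_closed unfolding free_mod_def by blast

lemma coord_dual: "i \<in> I \<Longrightarrow> restrict (\<lambda>x. s x i) (carrier M) \<in> dual_mod R M"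
  unfolding dual_mod_def using s_coord_closed s_add s_smult by auto

lemma p_zero: "p (restrict (\<lambda>i. \<zero>) I) = \<zero>\<^bsub>M\<^esub>"
proof -
  let ?z = "restrict (\<lambda>i. \<zero>) I"
  have z: "?z \<in> free_mod R I" using free_modI[of "\<lambda>i. \<zero>" "{}"] by simp
  have "p ?z = p (restrict (\<lambda>i. \<zero> \<otimes> ?z i) I)" by (simp cong: restrict_cong)
  also have "\<dots> = \<zero> \<odot>\<^bsub>M\<^esub> p ?z" using z by (rule p_smult[OF R.zero_closed])
  also have "\<dots> = \<zero>\<^bsub>M\<^esub>" using funcset_mem[OF p_closed z] by simp
  finally show ?thesis .
qed

lemma free_mod_finsum_closed:
  assumes "finite F" "\<And>k. k \<in> F \<Longrightarrow> g k \<in> free_mod R I"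
  shows "restrict (\<lambda>i. \<Oplus>k\<in>F. g k i) I \<in> free_mod R I"
proof (rule free_modI[where S = "\<Union>k\<in>F. {i \<in> I. g k i \<noteq> \<zero>}"])
  have g: "\<And>k i. k \<in> F \<Longrightarrow> i \<in> I \<Longrightarrow> g k i \<in> carrier R" using assms(2) unfolding free_mod_def by blast
  then show "(\<lambda>i. \<Oplus>k\<in>F. g k i) \<in> I \<rightarrow> carrier R" by (auto intro!: R.finsum_closed)
  show "finite (\<Union>k\<in>F. {i \<in> I. g k i \<noteq> \<zero>})" using assms unfolding free_mod_def by auto
  fix i assume "i \<in> I" "i \<notin> (\<Union>k\<in>F. {i \<in> I. g k i \<noteq> \<zero>})"
  then have "(\<Oplus>k\<in>F. g k i) = (\<Oplus>k\<in>F. \<zero>)" by (intro R.finsum_cong') auto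
  then show "(\<Oplus>k\<in>F. g k i) = \<zero>" by simp
qed

lemma p_finsum:
  assumes "finite F" "\<And>k. k \<in> F \<Longrightarrow> g k \<in> free_mod R I"
  shows "p (restrict (\<lambda>i. \<Oplus>k\<in>F. g k i) I) = (\<Oplus>\<^bsub>M\<^esub>k\<in>F. p (g k))"
  using assms
proof (induction F rule: finite_induct)
  case empty
  then show ?case using p_zero by (simp add: restrict_def)
next
  case (insert k F)
  let ?S = "restrict (\<lambda>i. \<Oplus>k\<in>F. g k i) I"
  have g: "\<And>j i. j \<in> insert k F \<Longrightarrow> i \<in> I \<Longrightarrow> g j i \<in> carrier R"
    using insert.prems unfolding free_mod_def by blast
  have S: "?S \<in> free_mod R I" using insert by (intro free_mod_finsum_closed) auto
  have "restrict (\<lambda>i. \<Oplus>k\<in>insert k F. g k i) I = restrict (\<lambda>i. g k i \<oplus> ?S i) I"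
    using insert.hyps g by (intro restrict_ext) (auto simp: Pi_iff)
  then have "p (restrict (\<lambda>i. \<Oplus>k\<in>insert k F. g k i) I) = p (g k) \<oplus>\<^bsub>M\<^esub> p ?S"
    using p_add[OF _ S] insert.prems by simp
  also have "p ?S = (\<Oplus>\<^bsub>M\<^esub>k\<in>F. p (g k))" using insert.prems by (intro insert.IH) auto
  also have "p (g k) \<oplus>\<^bsub>M\<^esub> (\<Oplus>\<^bsub>M\<^esub>k\<in>F. p (g k)) = (\<Oplus>\<^bsub>M\<^esub>k\<in>insert k F. p (g k))"
    using insert p_closed by (auto simp: Pi_def)
  finally show ?case .
qed

text \<open>A finite generating set of M only meets finitely many coordinates of the free module;
  these coordinate forms and the images under p of the corresponding unit vectors form a
  dual basis.\<close>

lemma coords_vanish_outside_generators: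
  assumes A: "finite A" "A \<subseteq> carrier M"
    and gen: "\<And>x. x \<in> carrier M \<Longrightarrow> \<exists>c. c \<in> A \<rightarrow> carrier R \<and> x = (\<Oplus>\<^bsub>M\<^esub>a\<in>A. c a \<odot>\<^bsub>M\<^esub> a)"
    and x: "x \<in> carrier M" and i: "i \<in> I" "\<forall>a\<in>A. s a i = \<zero>"
  shows "s x i = \<zero>"
proof -
  obtain c where c: "c \<in> A \<rightarrow> carrier R" "x = (\<Oplus>\<^bsub>M\<^esub>a\<in>A. c a \<odot>\<^bsub>M\<^esub> a)" using gen[OF x] by blast
  let ?w = "restrict (\<lambda>x. s x i) (carrier M)"
  have "s x i = ?w x" using x by simp
  also have "\<dots> = (\<Oplus>a\<in>A. ?w (c a \<odot>\<^bsub>M\<^esub> a))"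
    unfolding c(2) using c(1) A by (intro dual_mod_finsum coord_dual i) auto
  also have "\<dots> = (\<Oplus>a\<in>A. \<zero>)"
    using c(1) A i dual_modD(4)[OF coord_dual[OF i(1)]] by (intro R.finsum_cong') (auto simp: Pi_iff subset_iff)
  finally show ?thesis by simp
qed

definition unit_vec :: "'i \<Rightarrow> 'i \<Rightarrow> 'r" where
  "unit_vec j = restrict (\<lambda>i. if i = j then \<one> else \<zero>) I"

lemma unit_vec_in_free_mod: "unit_vec j \<in> free_mod R I"
  unfolding unit_vec_def by (rule free_modI[where S = "{j}"]) auto

lemma expand_by_unit_vecs:
  assumes x: "x \<in> carrier M" and J: "finite J" "J \<subseteq> I"
    and vanish: "\<And>i. i \<in> I \<Longrightarrow> i \<notin> J \<Longrightarrow> s x i = \<zero>"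
  shows "x = (\<Oplus>\<^bsub>M\<^esub>j\<in>J. s x j \<odot>\<^bsub>M\<^esub> p (unit_vec j))"
proof -
  define g where "g j = restrict (\<lambda>i. s x j \<otimes> unit_vec j i) I" for j
  have sx: "\<And>j. j \<in> J \<Longrightarrow> s x j \<in> carrier R" using s_coord_closed[OF x] J(2) by blast
  have g: "\<And>j. j \<in> J \<Longrightarrow> g j \<in> free_mod R I"
    unfolding g_def unit_vec_def by (rule free_modI[where S = "{j}" for j]) (use sx in auto)
  have "s x = restrict (\<lambda>i. \<Oplus>j\<in>J. g j i) I"
  proof (rule extensionalityI[of _ I])
    show "s x \<in> extensional I" using s_closed x unfolding free_mod_def by blast
    fix i assume i: "i \<in> I"
    have "(\<Oplus>j\<in>J. g j i) = (\<Oplus>j\<in>J. if i = j then s x j else \<zero>)"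
      using sx i by (intro R.finsum_cong') (auto simp: g_def unit_vec_def)
    also have "\<dots> = s x i"
    proof (cases "i \<in> J")
      case True
      then show ?thesis using J sx by (intro R.add.finprod_singleton) auto
    next
      case False
      then have "(\<Oplus>j\<in>J. if i = j then s x j else \<zero>) = (\<Oplus>j\<in>J. \<zero>)" by (intro R.finsum_cong') auto
      then show ?thesis using vanish[OF i False] by simp
    qed
    finally show "s x i = restrict (\<lambda>i. \<Oplus>j\<in>J. g j i) I i" using i by simp
  qed simp
  then have "x = p (restrict (\<lambda>i. \<Oplus>j\<in>J. g j i) I)" using p_s[OF x] by simp
  also have "\<dots> = (\<Oplus>\<^bsub>M\<^esub>j\<in>J. p (g j))" by (rule p_finsum[OF J(1) g])
  also have "\<dots> = (\<Oplus>\<^bsub>M\<^esub>j\<in>J. s x j \<odot>\<^bsub>M\<^esub> p (unit_vec j))"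
    unfolding g_def using p_smult[OF sx unit_vec_in_free_mod] sx funcset_mem[OF p_closed unit_vec_in_free_mod]
    by (intro M.finsum_cong') auto
  finally show ?thesis .
qed

lemma dual_basis_exists:
  assumes A: "finite A" "A \<subseteq> carrier M"
    and gen: "\<And>x. x \<in> carrier M \<Longrightarrow> \<exists>c. c \<in> A \<rightarrow> carrier R \<and> x = (\<Oplus>\<^bsub>M\<^esub>a\<in>A. c a \<odot>\<^bsub>M\<^esub> a)"
  shows "\<exists>J w e. dual_basis R M (J :: 'i set) w e"
proof -
  define J where "J = (\<Union>a\<in>A. {i \<in> I. s a i \<noteq> \<zero>})"
  have J: "finite J" "J \<subseteq> I" unfolding J_def using A s_closed unfolding free_mod_def by auto
  have "dual_basis R M J (\<lambda>j. restrict (\<lambda>x. s x j) (carrier M)) (\<lambda>j. p (unit_vec j))"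
    unfolding dual_basis_def
  proof (intro conjI ballI)
    fix x assume x: "x \<in> carrier M"
    have "s x i = \<zero>" if "i \<in> I" "i \<notin> J" for i
      using coords_vanish_outside_generators[OF A gen x that(1)] that by (auto simp: J_def)
    with x J have "x = (\<Oplus>\<^bsub>M\<^esub>j\<in>J. s x j \<odot>\<^bsub>M\<^esub> p (unit_vec j))" by (rule expand_by_unit_vecs)
    then show "x = (\<Oplus>\<^bsub>M\<^esub>j\<in>J. restrict (\<lambda>x. s x j) (carrier M) x \<odot>\<^bsub>M\<^esub> p (unit_vec j))"
      using x by simp
  qed (use J coord_dual unit_vec_in_free_mod p_closed in auto)
  then show ?thesis by blast
qed

end

context module
begin

lemma dual_basis_if_fin_type_projective:
  assumes "fin_type R M" "projective_mod R M"
  shows "\<exists>J W. J \<subseteq> carrier M \<and> dual_basis R M J W id"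
proof -
  obtain A where A: "finite A" "A \<subseteq> carrier M"
    "\<And>x. x \<in> carrier M \<Longrightarrow> \<exists>c. c \<in> A \<rightarrow> carrier R \<and> x = (\<Oplus>\<^bsub>M\<^esub>a\<in>A. c a \<odot>\<^bsub>M\<^esub> a)"
    using assms(1) unfolding fin_type_def by blast
  have "\<exists>I s p. free_retract R M (I :: 'c set) s p"
    using assms(2) unfolding projective_mod_def free_retract_def free_retract_axioms_def
    by (simp add: module_axioms Ball_def)
  then obtain I :: "'c set" and s p where "free_retract R M I s p" by blast
  then interpret free_retract R M I s p .
  obtain J :: "'c set" and w e where "dual_basis R M J w e" using dual_basis_exists[OF A] by blast
  then show ?thesis by (rule dual_basis_reindex_by_elements)
qed

lemma fin_type_projective_if_dual_basis:
  assumes "dual_basis R M K w e"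
  shows "fin_type R M \<and> projective_mod R M"
  using dual_basis_reindex_by_elements[OF assms] dual_basis_imp_fin_type dual_basis_imp_projective
  by blast

end

section \<open>The canonical morphism\<close>

definition formal_weight :: "('a \<Rightarrow> int) \<Rightarrow> nat" where
  "formal_weight c = (\<Sum>q\<in>{q. c q \<noteq> 0}. nat \<bar>c q\<bar>)"

lemma formal_weight_sgn_delta:
  assumes "finite {q. c q \<noteq> 0}" "c p \<noteq> 0"
  shows "formal_weight (\<lambda>q. c q - sgn (c p) * delta p q) < formal_weight c"
proof -
  let ?S = "{q. c q \<noteq> 0}" and ?c' = "\<lambda>q. c q - sgn (c p) * delta p q"
  have "{q. ?c' q \<noteq> 0} \<subseteq> ?S" using assms(2) by (auto simp: delta_def)
  then have "formal_weight ?c' = (\<Sum>q\<in>?S. nat \<bar>?c' q\<bar>)"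
    unfolding formal_weight_def using assms(1) by (intro sum.mono_neutral_left) auto
  also have "\<dots> < (\<Sum>q\<in>?S. nat \<bar>c q\<bar>)"
  proof (rule sum_strict_mono_ex1[OF assms(1)])
    show "\<forall>q\<in>?S. nat \<bar>?c' q\<bar> \<le> nat \<bar>c q\<bar>" by (auto simp: delta_def sgn_if)
    show "\<exists>q\<in>?S. nat \<bar>?c' q\<bar> < nat \<bar>c q\<bar>"
      using assms(2) by (intro bexI[of _ p]) (auto simp: delta_def sgn_if)
  qed
  finally show ?thesis unfolding formal_weight_def .
qed

locale tensor_setting = module R M + B: cring B
  for R :: "('r, 'c) ring_scheme" (structure) and M :: "('r, 'e, 'd) module_scheme"
    and B :: "('b, 'f) ring_scheme" +
  fixes phi :: "'r \<Rightarrow> 'b"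
  assumes phi_hom: "phi \<in> ring_hom R B"
begin

abbreviation TF where "TF \<equiv> tensor_free R M B"
abbreviation REL where "REL \<equiv> tensor_rel R M B phi"

abbreviation pure :: "('e \<Rightarrow> 'r) \<times> 'b \<Rightarrow> 'e \<Rightarrow> 'b" where
  "pure p x \<equiv> phi (fst p x) \<otimes>\<^bsub>B\<^esub> snd p"

lemma phi_closed: "a \<in> carrier R \<Longrightarrow> phi a \<in> carrier B"
  using phi_hom by (rule ring_hom_closed)

lemma phi_add: "a \<in> carrier R \<Longrightarrow> b \<in> carrier R \<Longrightarrow> phi (a \<oplus> b) = phi a \<oplus>\<^bsub>B\<^esub> phi b"
  using phi_hom by (rule ring_hom_add)

lemma phi_mult: "a \<in> carrier R \<Longrightarrow> b \<in> carrier R \<Longrightarrow> phi (a \<otimes> b) = phi a \<otimes>\<^bsub>B\<^esub> phi b"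
  using phi_hom by (rule ring_hom_mult)

lemma phi_zero: "phi \<zero> = \<zero>\<^bsub>B\<^esub>"
  using phi_hom by (simp add: ring_hom_zero[OF _ R.ring_axioms B.ring_axioms])

lemma pure_closed: "p \<in> dual_mod R M \<times> carrier B \<Longrightarrow> x \<in> carrier M \<Longrightarrow> pure p x \<in> carrier B"
  using dual_modD(2)[of "fst p" x] phi_closed by auto

lemma hom_to_algD:
  assumes "f \<in> hom_to_alg R M B phi"
  shows "f \<in> extensional (carrier M)" "\<And>x. x \<in> carrier M \<Longrightarrow> f x \<in> carrier B"
    "\<And>x y. x \<in> carrier M \<Longrightarrow> y \<in> carrier M \<Longrightarrow> f (x \<oplus>\<^bsub>M\<^esub> y) = f x \<oplus>\<^bsub>B\<^esub> f y"
    "\<And>a x. a \<in> carrier R \<Longrightarrow> x \<in> carrier M \<Longrightarrow> f (a \<odot>\<^bsub>M\<^esub> x) = phi a \<otimes>\<^bsub>B\<^esub> f x"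
  using assms unfolding hom_to_alg_def by auto

lemma hom_to_alg_zero:
  assumes "f \<in> hom_to_alg R M B phi"
  shows "f \<zero>\<^bsub>M\<^esub> = \<zero>\<^bsub>B\<^esub>"
proof -
  have "f \<zero>\<^bsub>M\<^esub> = f (\<zero> \<odot>\<^bsub>M\<^esub> \<zero>\<^bsub>M\<^esub>)" by simp
  also have "\<dots> = phi \<zero> \<otimes>\<^bsub>B\<^esub> f \<zero>\<^bsub>M\<^esub>" by (rule hom_to_algD(4)[OF assms]) simp_all
  also have "\<dots> = \<zero>\<^bsub>B\<^esub>" using hom_to_algD(2)[OF assms M.zero_closed] by (simp add: phi_zero)
  finally show ?thesis .
qed

lemma hom_to_alg_finsum:
  assumes "f \<in> hom_to_alg R M B phi" "finite K" "g \<in> K \<rightarrow> carrier M"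
  shows "f (\<Oplus>\<^bsub>M\<^esub>k\<in>K. g k) = (\<Oplus>\<^bsub>B\<^esub>k\<in>K. f (g k))"
  by (rule additive_finsum) (use assms hom_to_algD hom_to_alg_zero in
      \<open>auto simp: B.abelian_monoid_axioms M.abelian_monoid_axioms\<close>)

lemma tensor_free_iff: "c \<in> TF \<longleftrightarrow> finite {p. c p \<noteq> 0} \<and> {p. c p \<noteq> 0} \<subseteq> dual_mod R M \<times> carrier B"
  unfolding tensor_free_def by simp

lemma tensor_free_zero: "(\<lambda>q. 0) \<in> TF"
  unfolding tensor_free_iff by simp

lemma tensor_free_delta: "p \<in> dual_mod R M \<times> carrier B \<Longrightarrow> delta p \<in> TF"
  unfolding tensor_free_iff delta_def by auto

lemma tensor_free_add: "c \<in> TF \<Longrightarrow> d \<in> TF \<Longrightarrow> (\<lambda>q. c q + d q) \<in> TF"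
proof -
  have "{p. c p + d p \<noteq> 0} \<subseteq> {p. c p \<noteq> 0} \<union> {p. d p \<noteq> 0}" by auto
  then show "c \<in> TF \<Longrightarrow> d \<in> TF \<Longrightarrow> (\<lambda>q. c q + d q) \<in> TF"
    unfolding tensor_free_iff by (meson finite_Un finite_subset le_sup_iff subset_trans)
qed

lemma tensor_free_uminus: "c \<in> TF \<Longrightarrow> (\<lambda>q. - c q) \<in> TF"
  unfolding tensor_free_iff by simp

lemma tensor_free_diff: "c \<in> TF \<Longrightarrow> d \<in> TF \<Longrightarrow> (\<lambda>q. c q - d q) \<in> TF"
  using tensor_free_add[OF _ tensor_free_uminus] by simp

lemma tensor_free_sum: "finite K \<Longrightarrow> (\<And>k. k \<in> K \<Longrightarrow> h k \<in> TF) \<Longrightarrow> (\<lambda>q. \<Sum>k\<in>K. h k q) \<in> TF"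
  by (induction K rule: finite_induct) (auto intro: tensor_free_zero tensor_free_add)

text \<open>Every formal sum is reached from 0 by adding and subtracting single generators, each step
  lowering the weight.\<close>

lemma tensor_free_induct [consumes 1, case_names zero delta diff]:
  assumes "c \<in> TF"
    and zero: "P (\<lambda>q. 0)"
    and delta: "\<And>p. p \<in> dual_mod R M \<times> carrier B \<Longrightarrow> P (delta p)"
    and diff: "\<And>c d. c \<in> TF \<Longrightarrow> d \<in> TF \<Longrightarrow> P c \<Longrightarrow> P d \<Longrightarrow> P (\<lambda>q. c q - d q)"
  shows "P c"
proof -
  have step: "P (\<lambda>q. c q + delta p q)" "P (\<lambda>q. c q - delta p q)"
    if "c \<in> TF" "P c" "p \<in> dual_mod R M \<times> carrier B" for c p
  proof -
    have d: "delta p \<in> TF" "P (delta p)" using that(3) tensor_free_delta delta by auto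
    show "P (\<lambda>q. c q - delta p q)" using diff[OF that(1) d(1) that(2) d(2)] .
    have "P (\<lambda>q. 0 - delta p q)" using diff[OF tensor_free_zero d(1) zero d(2)] .
    from diff[OF that(1) tensor_free_diff[OF tensor_free_zero d(1)] that(2) this]
    show "P (\<lambda>q. c q + delta p q)" by simp
  qed
  show ?thesis using assms(1)
  proof (induction c rule: measure_induct_rule[of formal_weight])
    case (less c)
    show ?case
    proof (cases "\<forall>q. c q = 0")
      case True
      then have "c = (\<lambda>q. 0)" by auto
      then show ?thesis using zero by simp
    next
      case False
      then obtain p where p: "c p \<noteq> 0" by blast
      have S: "finite {q. c q \<noteq> 0}" "p \<in> dual_mod R M \<times> carrier B"
        using less.prems p unfolding tensor_free_iff by auto
      define c' where "c' = (\<lambda>q. c q - sgn (c p) * delta p q)"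
      have "{q. c' q \<noteq> 0} \<subseteq> {q. c q \<noteq> 0}" using p by (auto simp: c'_def delta_def)
      then have c': "c' \<in> TF" using less.prems unfolding tensor_free_iff by (meson finite_subset subset_trans)
      have "P c'" using less.IH[OF _ c'] formal_weight_sgn_delta[OF S(1) p] by (simp add: c'_def)
      then have "P (\<lambda>q. c' q + sgn (c p) * delta p q)"
        using step[OF c' _ S(2)] p by (cases "c p > 0") (auto simp: sgn_if)
      then show ?thesis by (simp add: c'_def)
    qed
  qed
qed

lemma add_pow_pure_closed:
  "p \<in> dual_mod R M \<times> carrier B \<Longrightarrow> x \<in> carrier M \<Longrightarrow> add_pow B (n::int) (pure p x) \<in> carrier B"
  by (rule B.add.int_pow_closed[OF pure_closed])

lemma canon_rep_eq_finsum:
  assumes "finite T" "{p. c p \<noteq> 0} \<subseteq> T" "T \<subseteq> dual_mod R M \<times> carrier B" "x \<in> carrier M"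
  shows "canon_rep R M B phi c x = (\<Oplus>\<^bsub>B\<^esub>p\<in>T. add_pow B (c p) (pure p x))"
proof -
  have "canon_rep R M B phi c x = (\<Oplus>\<^bsub>B\<^esub>p\<in>{p. c p \<noteq> 0}. add_pow B (c p) (pure p x))"
    unfolding canon_rep_def using assms(4) by simp
  also have "\<dots> = (\<Oplus>\<^bsub>B\<^esub>p\<in>T. add_pow B (c p) (pure p x))"
    by (rule B.add.finprod_mono_neutral_cong_left[OF assms(1,2)])
       (use assms(3,4) add_pow_pure_closed in \<open>auto simp: add_pow_def\<close>)
  finally show ?thesis .
qed

lemma canon_rep_closed: "c \<in> TF \<Longrightarrow> x \<in> carrier M \<Longrightarrow> canon_rep R M B phi c x \<in> carrier B"
  unfolding canon_rep_def tensor_free_iff using add_pow_pure_closed by (auto intro!: B.finsum_closed)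

lemma canon_rep_zero: "x \<in> carrier M \<Longrightarrow> canon_rep R M B phi (\<lambda>q. 0) x = \<zero>\<^bsub>B\<^esub>"
  unfolding canon_rep_def by simp

lemma canon_rep_delta:
  assumes "p \<in> dual_mod R M \<times> carrier B" "x \<in> carrier M"
  shows "canon_rep R M B phi (delta p) x = pure p x"
proof -
  have "{q. delta p q \<noteq> 0} = {p}" by (auto simp: delta_def)
  then show ?thesis using assms pure_closed unfolding canon_rep_def by (simp add: delta_def)
qed

lemma canon_rep_add:
  assumes "c \<in> TF" "d \<in> TF" "x \<in> carrier M"
  shows "canon_rep R M B phi (\<lambda>q. c q + d q) x = canon_rep R M B phi c x \<oplus>\<^bsub>B\<^esub> canon_rep R M B phi d x"
proof -
  define T where "T = {p. c p \<noteq> 0} \<union> {p. d p \<noteq> 0}"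
  have T: "finite T" "T \<subseteq> dual_mod R M \<times> carrier B" using assms unfolding T_def tensor_free_iff by auto
  have v: "\<And>p. p \<in> T \<Longrightarrow> pure p x \<in> carrier B" using T(2) assms(3) pure_closed by blast
  have "canon_rep R M B phi (\<lambda>q. c q + d q) x = (\<Oplus>\<^bsub>B\<^esub>p\<in>T. add_pow B (c p + d p) (pure p x))"
    using T assms(3) by (intro canon_rep_eq_finsum) (auto simp: T_def)
  also have "\<dots> = (\<Oplus>\<^bsub>B\<^esub>p\<in>T. add_pow B (c p) (pure p x) \<oplus>\<^bsub>B\<^esub> add_pow B (d p) (pure p x))"
    using v by (intro B.finsum_cong') (auto simp: B.add.int_pow_mult)
  also have "\<dots> = (\<Oplus>\<^bsub>B\<^esub>p\<in>T. add_pow B (c p) (pure p x)) \<oplus>\<^bsub>B\<^esub> (\<Oplus>\<^bsub>B\<^esub>p\<in>T. add_pow B (d p) (pure p x))"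
    using v by (intro B.finsum_addf) auto
  also have "\<dots> = canon_rep R M B phi c x \<oplus>\<^bsub>B\<^esub> canon_rep R M B phi d x"
    using T assms(3) canon_rep_eq_finsum[OF T(1) _ T(2)] by (simp add: T_def)
  finally show ?thesis .
qed

lemma canon_rep_uminus:
  assumes "c \<in> TF" "x \<in> carrier M"
  shows "canon_rep R M B phi (\<lambda>q. - c q) x = \<ominus>\<^bsub>B\<^esub> canon_rep R M B phi c x"
proof -
  define T where "T = {p. c p \<noteq> 0}"
  have T: "finite T" "T \<subseteq> dual_mod R M \<times> carrier B" using assms unfolding T_def tensor_free_iff by auto
  have v: "\<And>p. p \<in> T \<Longrightarrow> pure p x \<in> carrier B" using T(2) assms(2) pure_closed by blast
  have "canon_rep R M B phi (\<lambda>q. - c q) x = (\<Oplus>\<^bsub>B\<^esub>p\<in>T. \<ominus>\<^bsub>B\<^esub> add_pow B (c p) (pure p x))"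
    using T assms(2) v by (subst canon_rep_eq_finsum) (auto simp: T_def B.add.int_pow_neg intro!: B.finsum_cong')
  also have "\<dots> = \<ominus>\<^bsub>B\<^esub> (\<Oplus>\<^bsub>B\<^esub>p\<in>T. add_pow B (c p) (pure p x))"
    using T(1) v by (intro B.finsum_neg) auto
  also have "\<dots> = \<ominus>\<^bsub>B\<^esub> canon_rep R M B phi c x"
    using T assms(2) by (simp add: canon_rep_eq_finsum T_def)
  finally show ?thesis .
qed

lemma canon_rep_diff:
  assumes "c \<in> TF" "d \<in> TF" "x \<in> carrier M"
  shows "canon_rep R M B phi (\<lambda>q. c q - d q) x = canon_rep R M B phi c x \<ominus>\<^bsub>B\<^esub> canon_rep R M B phi d x"
  using canon_rep_add[OF assms(1) tensor_free_uminus[OF assms(2)] assms(3)] canon_rep_uminus[OF assms(2,3)]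
  by (simp add: a_minus_def)

lemma canon_rep_sum_delta:
  assumes "finite K" "\<And>k. k \<in> K \<Longrightarrow> p k \<in> dual_mod R M \<times> carrier B" "x \<in> carrier M"
  shows "canon_rep R M B phi (\<lambda>q. \<Sum>k\<in>K. delta (p k) q) x = (\<Oplus>\<^bsub>B\<^esub>k\<in>K. pure (p k) x)"
  using assms(1,2)
proof (induction K rule: finite_induct)
  case empty
  then show ?case using canon_rep_zero[OF assms(3)] by simp
next
  case (insert k K)
  have "(\<lambda>q. \<Sum>k\<in>K. delta (p k) q) \<in> TF" using insert by (intro tensor_free_sum tensor_free_delta) auto
  then show ?case
    using insert canon_rep_add[OF tensor_free_delta _ assms(3)] canon_rep_delta assms(3) pure_closed
    by (simp add: Pi_iff)
qed

lemma canon_rep_in_hom_to_alg: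
  assumes "c \<in> TF"
  shows "canon_rep R M B phi c \<in> hom_to_alg R M B phi"
proof -
  define S where "S = {p. c p \<noteq> 0}"
  have S: "finite S" "S \<subseteq> dual_mod R M \<times> carrier B" using assms unfolding S_def tensor_free_iff by auto
  have v: "\<And>p x. p \<in> S \<Longrightarrow> x \<in> carrier M \<Longrightarrow> add_pow B (c p) (pure p x) \<in> carrier B"
    using S(2) add_pow_pure_closed by blast
  have eq: "\<And>x. x \<in> carrier M \<Longrightarrow> canon_rep R M B phi c x = (\<Oplus>\<^bsub>B\<^esub>p\<in>S. add_pow B (c p) (pure p x))"
    unfolding canon_rep_def S_def by simp
  have pure_add: "pure p (x \<oplus>\<^bsub>M\<^esub> y) = pure p x \<oplus>\<^bsub>B\<^esub> pure p y"
    if "p \<in> S" "x \<in> carrier M" "y \<in> carrier M" for p x y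
    using that S(2) dual_modD(2,3)[of "fst p"] by (auto simp: phi_add phi_closed B.l_distr)
  have pure_smult: "pure p (a \<odot>\<^bsub>M\<^esub> x) = phi a \<otimes>\<^bsub>B\<^esub> pure p x"
    if "p \<in> S" "a \<in> carrier R" "x \<in> carrier M" for p a x
    using that S(2) dual_modD(2,4)[of "fst p"] by (auto simp: phi_mult phi_closed B.m_assoc)
  show ?thesis unfolding hom_to_alg_def
  proof (intro CollectI conjI ballI)
    show "canon_rep R M B phi c \<in> extensional (carrier M)" unfolding canon_rep_def by simp
    show "canon_rep R M B phi c \<in> carrier M \<rightarrow> carrier B" using canon_rep_closed[OF assms] by blast
  next
    fix x y assume xy: "x \<in> carrier M" "y \<in> carrier M"
    have "(\<Oplus>\<^bsub>B\<^esub>p\<in>S. add_pow B (c p) (pure p (x \<oplus>\<^bsub>M\<^esub> y))) =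
          (\<Oplus>\<^bsub>B\<^esub>p\<in>S. add_pow B (c p) (pure p x) \<oplus>\<^bsub>B\<^esub> add_pow B (c p) (pure p y))"
      using xy S(2) pure_closed v by (intro B.finsum_cong') (auto simp: pure_add B.add.int_pow_distrib)
    then show "canon_rep R M B phi c (x \<oplus>\<^bsub>M\<^esub> y) = canon_rep R M B phi c x \<oplus>\<^bsub>B\<^esub> canon_rep R M B phi c y"
      using xy v by (simp add: eq Pi_iff)
  next
    fix a x assume ax: "a \<in> carrier R" "x \<in> carrier M"
    have "(\<Oplus>\<^bsub>B\<^esub>p\<in>S. add_pow B (c p) (pure p (a \<odot>\<^bsub>M\<^esub> x))) =
          (\<Oplus>\<^bsub>B\<^esub>p\<in>S. phi a \<otimes>\<^bsub>B\<^esub> add_pow B (c p) (pure p x))"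
      using ax S(2) pure_closed phi_closed v by (intro B.finsum_cong') (auto simp: pure_smult B.add_pow_rdistr_int)
    then show "canon_rep R M B phi c (a \<odot>\<^bsub>M\<^esub> x) = phi a \<otimes>\<^bsub>B\<^esub> canon_rep R M B phi c x"
      using ax v S(1) phi_closed by (simp add: eq B.finsum_rdistr Pi_iff)
  qed
qed

lemma rel_gen_add_left:
  "u \<in> dual_mod R M \<Longrightarrow> u' \<in> dual_mod R M \<Longrightarrow> b \<in> carrier B \<Longrightarrow>
   (\<lambda>q. delta (restrict (\<lambda>x. u x \<oplus> u' x) (carrier M), b) q - delta (u, b) q - delta (u', b) q) \<in> REL"
  by (rule tensor_rel.gen) (unfold tensor_gens_def, blast)

lemma rel_gen_add_right:
  "u \<in> dual_mod R M \<Longrightarrow> b \<in> carrier B \<Longrightarrow> b' \<in> carrier B \<Longrightarrow>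
   (\<lambda>q. delta (u, b \<oplus>\<^bsub>B\<^esub> b') q - delta (u, b) q - delta (u, b') q) \<in> REL"
  by (rule tensor_rel.gen) (unfold tensor_gens_def, blast)

lemma rel_gen_scalar:
  "a \<in> carrier R \<Longrightarrow> u \<in> dual_mod R M \<Longrightarrow> b \<in> carrier B \<Longrightarrow>
   (\<lambda>q. delta (restrict (\<lambda>x. a \<otimes> u x) (carrier M), b) q - delta (u, phi a \<otimes>\<^bsub>B\<^esub> b) q) \<in> REL"
  by (rule tensor_rel.gen) (unfold tensor_gens_def, blast)

lemma rel_uminus: "r \<in> REL \<Longrightarrow> (\<lambda>q. - r q) \<in> REL"
  using tensor_rel.diff[OF tensor_rel.zero, of r] by simp

lemma rel_add: "r \<in> REL \<Longrightarrow> s \<in> REL \<Longrightarrow> (\<lambda>q. r q + s q) \<in> REL"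
  using tensor_rel.diff[OF _ rel_uminus, of r s] by simp

lemma rel_sum: "finite K \<Longrightarrow> (\<And>k. k \<in> K \<Longrightarrow> f k \<in> REL) \<Longrightarrow> (\<lambda>q. \<Sum>k\<in>K. f k q) \<in> REL"
  by (induction K rule: finite_induct) (auto intro: tensor_rel.zero rel_add)

lemma rel_subset_tensor_free: "r \<in> REL \<Longrightarrow> r \<in> TF"
proof (induction rule: tensor_rel.induct)
  case (gen g)
  then show ?case unfolding tensor_gens_def
    by (auto intro!: tensor_free_diff tensor_free_delta dual_mod_add_closed dual_mod_scale_closed phi_closed)
qed (auto intro: tensor_free_zero tensor_free_diff)

lemma canon_rep_gen:
  assumes "g \<in> tensor_gens R M B phi" "x \<in> carrier M"
  shows "canon_rep R M B phi g x = \<zero>\<^bsub>B\<^esub>"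
  using assms(1) unfolding tensor_gens_def
proof (elim UnE CollectE exE conjE)
  fix w w' b assume g: "g = (\<lambda>q. delta (restrict (\<lambda>x. w x \<oplus> w' x) (carrier M), b) q - delta (w, b) q - delta (w', b) q)"
    and h: "w \<in> dual_mod R M" "w' \<in> dual_mod R M" "b \<in> carrier B"
  have "canon_rep R M B phi g x = (pure (w, b) x \<oplus>\<^bsub>B\<^esub> pure (w', b) x) \<ominus>\<^bsub>B\<^esub> pure (w, b) x \<ominus>\<^bsub>B\<^esub> pure (w', b) x"
    unfolding g using h assms(2) dual_modD(2)[of w x] dual_modD(2)[of w' x]
    by (simp add: canon_rep_diff tensor_free_diff tensor_free_delta canon_rep_delta dual_mod_add_closed
        phi_add phi_closed B.l_distr)
  then show ?thesis using h assms(2) pure_closed[of "(w, b)"] pure_closed[of "(w', b)"] by (simp add: B.add_minus_minus_self)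
next
  fix w b b' assume g: "g = (\<lambda>q. delta (w, b \<oplus>\<^bsub>B\<^esub> b') q - delta (w, b) q - delta (w, b') q)"
    and h: "w \<in> dual_mod R M" "b \<in> carrier B" "b' \<in> carrier B"
  have "canon_rep R M B phi g x = (pure (w, b) x \<oplus>\<^bsub>B\<^esub> pure (w, b') x) \<ominus>\<^bsub>B\<^esub> pure (w, b) x \<ominus>\<^bsub>B\<^esub> pure (w, b') x"
    unfolding g using h assms(2) dual_modD(2)[of w x]
    by (simp add: canon_rep_diff tensor_free_diff tensor_free_delta canon_rep_delta phi_closed B.r_distr)
  then show ?thesis using h assms(2) pure_closed[of "(w, b)"] pure_closed[of "(w, b')"] by (simp add: B.add_minus_minus_self)
next
  fix a w b assume g: "g = (\<lambda>q. delta (restrict (\<lambda>x. a \<otimes> w x) (carrier M), b) q - delta (w, phi a \<otimes>\<^bsub>B\<^esub> b) q)"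
    and h: "a \<in> carrier R" "w \<in> dual_mod R M" "b \<in> carrier B"
  have "canon_rep R M B phi g x = pure (w, phi a \<otimes>\<^bsub>B\<^esub> b) x \<ominus>\<^bsub>B\<^esub> pure (w, phi a \<otimes>\<^bsub>B\<^esub> b) x"
    unfolding g using h assms(2) dual_modD(2)[of w x]
    by (simp add: canon_rep_diff tensor_free_diff tensor_free_delta canon_rep_delta dual_mod_scale_closed
        phi_mult phi_closed B.m_ac)
  then show ?thesis using h assms(2) pure_closed[of "(w, phi a \<otimes>\<^bsub>B\<^esub> b)"] phi_closed by (simp add: B.r_neg B.minus_eq)
qed

lemma canon_rep_rel: "r \<in> REL \<Longrightarrow> x \<in> carrier M \<Longrightarrow> canon_rep R M B phi r x = \<zero>\<^bsub>B\<^esub>"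
proof (induction rule: tensor_rel.induct)
  case (diff u v)
  then show ?case by (simp add: canon_rep_diff rel_subset_tensor_free B.minus_eq)
qed (simp_all add: canon_rep_zero canon_rep_gen)

lemma canon_rep_eqI:
  assumes "c \<in> TF" "d \<in> TF" "(\<lambda>q. c q - d q) \<in> REL"
  shows "canon_rep R M B phi c = canon_rep R M B phi d"
proof (rule extensionalityI[of _ "carrier M"])
  fix x assume x: "x \<in> carrier M"
  have "canon_rep R M B phi c x \<ominus>\<^bsub>B\<^esub> canon_rep R M B phi d x = \<zero>\<^bsub>B\<^esub>"
    using canon_rep_rel[OF assms(3) x] canon_rep_diff[OF assms(1,2) x] by simp
  then show "canon_rep R M B phi c x = canon_rep R M B phi d x"
    using canon_rep_closed[OF assms(1) x] canon_rep_closed[OF assms(2) x] by (rule B.minus_eq_zero_imp_eq[rotated 2])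
qed (simp_all add: canon_rep_def)

definition tensor_eqv :: "((('e \<Rightarrow> 'r) \<times> 'b \<Rightarrow> int) \<times> (('e \<Rightarrow> 'r) \<times> 'b \<Rightarrow> int)) set" where
  "tensor_eqv = {(c, c'). c \<in> TF \<and> c' \<in> TF \<and> (\<lambda>q. c q - c' q) \<in> REL}"

lemma tensor_dual_eq_quotient: "tensor_dual R M B phi = TF // tensor_eqv"
  unfolding tensor_dual_def tensor_eqv_def by simp

lemma equiv_tensor_eqv: "equiv TF tensor_eqv"
proof (rule equivI)
  show "tensor_eqv \<subseteq> TF \<times> TF" unfolding tensor_eqv_def by auto
  show "refl_on TF tensor_eqv" unfolding refl_on_def tensor_eqv_def using tensor_rel.zero by auto
  show "sym tensor_eqv" unfolding sym_def tensor_eqv_def using rel_uminus by fastforce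
  show "trans tensor_eqv" unfolding trans_def tensor_eqv_def using rel_add by fastforce
qed

lemma tensor_eqv_class_eq_iff:
  "c \<in> TF \<Longrightarrow> d \<in> TF \<Longrightarrow> tensor_eqv `` {c} = tensor_eqv `` {d} \<longleftrightarrow> (\<lambda>q. c q - d q) \<in> REL"
  using eq_equiv_class_iff[OF equiv_tensor_eqv] unfolding tensor_eqv_def by simp

lemma canon_map_class:
  assumes "c \<in> TF"
  shows "canon_map R M B phi (tensor_eqv `` {c}) = canon_rep R M B phi c"
proof -
  have "canon_rep R M B phi d = canon_rep R M B phi c" if "d \<in> tensor_eqv `` {c}" for d
    using that canon_rep_eqI unfolding tensor_eqv_def by auto
  moreover have "c \<in> tensor_eqv `` {c}" using equiv_class_self[OF equiv_tensor_eqv assms] .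
  ultimately have "canon_rep R M B phi ` (tensor_eqv `` {c}) = {canon_rep R M B phi c}" by blast
  then show ?thesis unfolding canon_map_def by simp
qed

lemma rel_delta_zero_right: "u \<in> dual_mod R M \<Longrightarrow> delta (u, \<zero>\<^bsub>B\<^esub>) \<in> REL"
  using rel_uminus[OF rel_gen_add_right[OF _ B.zero_closed B.zero_closed]] by simp

lemma rel_delta_diff_right:
  assumes "u \<in> dual_mod R M" "b \<in> carrier B" "b' \<in> carrier B"
  shows "(\<lambda>q. delta (u, b \<ominus>\<^bsub>B\<^esub> b') q - delta (u, b) q + delta (u, b') q) \<in> REL"
proof -
  have "(b \<ominus>\<^bsub>B\<^esub> b') \<oplus>\<^bsub>B\<^esub> b' = b" using assms(2,3) by (simp add: B.minus_eq B.a_assoc B.l_neg)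
  then show ?thesis
    using rel_uminus[OF rel_gen_add_right[OF assms(1) B.minus_closed[OF assms(2,3)] assms(3)]]
    by (simp add: algebra_simps)
qed

lemma rel_delta_finsum_left:
  assumes "finite K" "\<And>k. k \<in> K \<Longrightarrow> u k \<in> dual_mod R M" "b \<in> carrier B"
  shows "(\<lambda>q. delta (restrict (\<lambda>x. \<Oplus>k\<in>K. u k x) (carrier M), b) q - (\<Sum>k\<in>K. delta (u k, b) q)) \<in> REL"
  using assms(1,2)
proof (induction K rule: finite_induct)
  case empty
  let ?z = "restrict (\<lambda>x. \<zero>) (carrier M)"
  have "restrict (\<lambda>x. ?z x \<oplus> ?z x) (carrier M) = ?z" by (rule restrict_ext) simp
  then have "(\<lambda>q. - delta (?z, b) q) \<in> REL"
    using rel_gen_add_left[OF dual_mod_zero_closed dual_mod_zero_closed assms(3)] by simp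
  from rel_uminus[OF this] show ?case by (simp add: restrict_def)
next
  case (insert k K)
  define U where "U = restrict (\<lambda>x. \<Oplus>k\<in>K. u k x) (carrier M)"
  define V where "V = restrict (\<lambda>x. \<Oplus>k\<in>insert k K. u k x) (carrier M)"
  have "V = restrict (\<lambda>x. u k x \<oplus> U x) (carrier M)"
    unfolding U_def V_def using insert.hyps insert.prems dual_modD(2) by (intro restrict_ext) auto
  moreover have "U \<in> dual_mod R M" unfolding U_def using insert.prems insert.hyps(1) by (intro dual_mod_finsum_closed) auto
  ultimately have "(\<lambda>q. delta (V, b) q - delta (u k, b) q - delta (U, b) q) \<in> REL"
    using insert.prems assms(3) rel_gen_add_left by simp
  moreover have "(\<lambda>q. delta (U, b) q - (\<Sum>k\<in>K. delta (u k, b) q)) \<in> REL"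
    unfolding U_def using insert.prems by (intro insert.IH) auto
  ultimately have "(\<lambda>q. (delta (V, b) q - delta (u k, b) q - delta (U, b) q)
      + (delta (U, b) q - (\<Sum>k\<in>K. delta (u k, b) q))) \<in> REL"
    by (rule rel_add)
  then show ?case
    unfolding V_def[symmetric] using insert.hyps by (simp add: algebra_simps)
qed

end

section \<open>A dual basis makes the canonical morphism bijective\<close>

locale dual_basis_setting = tensor_setting +
  fixes K :: "'k set" and w and e
  assumes dual_basis: "dual_basis R M K w e"
begin

lemma K_finite: "finite K"
  and w_dual: "k \<in> K \<Longrightarrow> w k \<in> dual_mod R M"
  and e_closed: "k \<in> K \<Longrightarrow> e k \<in> carrier M"
  and expand: "x \<in> carrier M \<Longrightarrow> x = (\<Oplus>\<^bsub>M\<^esub>k\<in>K. w k x \<odot>\<^bsub>M\<^esub> e k)"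
  using dual_basis unfolding dual_basis_def by auto

text \<open>basis_tensor f is the formal sum of the w k \<otimes> f (e k); it represents f, and every formal sum
  c is equivalent to the one attached to its image under the canonical morphism.\<close>

definition basis_tensor where
  "basis_tensor f = (\<lambda>q. \<Sum>k\<in>K. delta (w k, f (e k)) q)"

lemma basis_tensor_in_tensor_free: "(\<And>k. k \<in> K \<Longrightarrow> f (e k) \<in> carrier B) \<Longrightarrow> basis_tensor f \<in> TF"
  unfolding basis_tensor_def by (rule tensor_free_sum[OF K_finite]) (auto intro: tensor_free_delta w_dual)

lemma basis_tensor_cong: "(\<And>k. k \<in> K \<Longrightarrow> f (e k) = g (e k)) \<Longrightarrow> basis_tensor f = basis_tensor g"
  unfolding basis_tensor_def by (auto intro!: sum.cong)

lemma canon_rep_basis_tensor: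
  assumes f: "f \<in> hom_to_alg R M B phi"
  shows "canon_rep R M B phi (basis_tensor f) = f"
proof (rule extensionalityI[of _ "carrier M"])
  fix x assume x: "x \<in> carrier M"
  have wx: "\<And>k. k \<in> K \<Longrightarrow> w k x \<in> carrier R" using w_dual dual_modD(2) x by blast
  have "canon_rep R M B phi (basis_tensor f) x = (\<Oplus>\<^bsub>B\<^esub>k\<in>K. pure (w k, f (e k)) x)"
    unfolding basis_tensor_def using K_finite w_dual e_closed hom_to_algD(2)[OF f] x
    by (intro canon_rep_sum_delta) auto
  also have "\<dots> = (\<Oplus>\<^bsub>B\<^esub>k\<in>K. f (w k x \<odot>\<^bsub>M\<^esub> e k))"
    using wx e_closed hom_to_algD(2,4)[OF f] phi_closed by (intro B.finsum_cong') auto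
  also have "\<dots> = f (\<Oplus>\<^bsub>M\<^esub>k\<in>K. w k x \<odot>\<^bsub>M\<^esub> e k)"
    using wx e_closed by (intro hom_to_alg_finsum[OF f K_finite, symmetric]) auto
  also have "\<dots> = f x" using expand[OF x] by simp
  finally show "canon_rep R M B phi (basis_tensor f) x = f x" .
qed (use hom_to_algD(1)[OF f] in \<open>simp_all add: canon_rep_def\<close>)

lemma rel_basis_tensor_zero: "basis_tensor (\<lambda>x. \<zero>\<^bsub>B\<^esub>) \<in> REL"
  unfolding basis_tensor_def by (intro rel_sum[OF K_finite] rel_delta_zero_right w_dual)

lemma rel_basis_tensor_diff:
  assumes "\<And>k. k \<in> K \<Longrightarrow> f (e k) \<in> carrier B" "\<And>k. k \<in> K \<Longrightarrow> g (e k) \<in> carrier B"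
  shows "(\<lambda>q. basis_tensor (\<lambda>x. f x \<ominus>\<^bsub>B\<^esub> g x) q - basis_tensor f q + basis_tensor g q) \<in> REL"
proof -
  have "(\<lambda>q. \<Sum>k\<in>K. delta (w k, f (e k) \<ominus>\<^bsub>B\<^esub> g (e k)) q - delta (w k, f (e k)) q + delta (w k, g (e k)) q) \<in> REL"
    using assms by (intro rel_sum[OF K_finite] rel_delta_diff_right w_dual)
  then show ?thesis unfolding basis_tensor_def by (simp add: sum.distrib sum_subtractf)
qed

text \<open>The key step: expanding u as the sum of the u (e k) w k and moving the scalars u (e k)
  across the tensor sign gives u \<otimes> b = \<Sum>k. w k \<otimes> u (e k) b.\<close>

lemma rel_delta_basis_tensor:
  assumes "u \<in> dual_mod R M" "b \<in> carrier B"
  shows "(\<lambda>q. delta (u, b) q - basis_tensor (pure (u, b)) q) \<in> REL"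
proof -
  define v where "v k = restrict (\<lambda>x. u (e k) \<otimes> w k x) (carrier M)" for k
  have ue: "\<And>k. k \<in> K \<Longrightarrow> u (e k) \<in> carrier R" using dual_modD(2)[OF assms(1)] e_closed by blast
  have "restrict (\<lambda>x. \<Oplus>k\<in>K. v k x) (carrier M) = restrict (\<lambda>x. \<Oplus>k\<in>K. u (e k) \<otimes> w k x) (carrier M)"
    unfolding v_def by (intro restrict_ext) simp
  also have "\<dots> = u" using dual_basis_expand_dual[OF dual_basis assms(1)] by simp
  finally have u_eq: "restrict (\<lambda>x. \<Oplus>k\<in>K. v k x) (carrier M) = u" .
  have "(\<lambda>q. delta (restrict (\<lambda>x. \<Oplus>k\<in>K. v k x) (carrier M), b) q - (\<Sum>k\<in>K. delta (v k, b) q)) \<in> REL"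
    using ue w_dual assms(2) unfolding v_def
    by (intro rel_delta_finsum_left[OF K_finite] dual_mod_scale_closed) auto
  then have "(\<lambda>q. delta (u, b) q - (\<Sum>k\<in>K. delta (v k, b) q)) \<in> REL" by (simp only: u_eq)
  moreover have "(\<lambda>q. \<Sum>k\<in>K. delta (v k, b) q - delta (w k, phi (u (e k)) \<otimes>\<^bsub>B\<^esub> b) q) \<in> REL"
    unfolding v_def using ue w_dual assms(2) by (intro rel_sum[OF K_finite] rel_gen_scalar)
  ultimately show ?thesis
    using rel_add by (fastforce simp: basis_tensor_def sum_subtractf)
qed

lemma rel_basis_tensor_canon_rep:
  assumes "c \<in> TF"
  shows "(\<lambda>q. c q - basis_tensor (canon_rep R M B phi c) q) \<in> REL"
  using assms
proof (induction c rule: tensor_free_induct)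
  case zero
  have "basis_tensor (canon_rep R M B phi (\<lambda>q. 0)) = basis_tensor (\<lambda>x. \<zero>\<^bsub>B\<^esub>)"
    by (intro basis_tensor_cong) (simp add: canon_rep_zero e_closed)
  then show ?case using rel_uminus[OF rel_basis_tensor_zero] by simp
next
  case (delta p)
  moreover have "basis_tensor (canon_rep R M B phi (delta p)) = basis_tensor (pure p)"
    using delta by (intro basis_tensor_cong) (simp add: canon_rep_delta e_closed)
  ultimately show ?case using rel_delta_basis_tensor[of "fst p" "snd p"] by auto
next
  case (diff c d)
  let ?f = "canon_rep R M B phi c" and ?g = "canon_rep R M B phi d"
  have "basis_tensor (canon_rep R M B phi (\<lambda>q. c q - d q)) = basis_tensor (\<lambda>x. ?f x \<ominus>\<^bsub>B\<^esub> ?g x)"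
    using diff.hyps by (intro basis_tensor_cong) (simp add: canon_rep_diff e_closed)
  moreover have "(\<lambda>q. basis_tensor (\<lambda>x. ?f x \<ominus>\<^bsub>B\<^esub> ?g x) q - basis_tensor ?f q + basis_tensor ?g q) \<in> REL"
    using diff.hyps canon_rep_closed e_closed by (intro rel_basis_tensor_diff) auto
  ultimately show ?case
    using tensor_rel.diff[OF tensor_rel.diff[OF diff.IH]] by (fastforce simp: algebra_simps)
qed

theorem canon_iso: "canon_iso R M B phi"
  unfolding canon_iso_def tensor_dual_eq_quotient bij_betw_def
proof
  show "inj_on (canon_map R M B phi) (TF // tensor_eqv)"
  proof (rule inj_onI)
    fix X Y assume "X \<in> TF // tensor_eqv" "Y \<in> TF // tensor_eqv"
      and eq: "canon_map R M B phi X = canon_map R M B phi Y"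
    then obtain c d where c: "X = tensor_eqv `` {c}" "c \<in> TF" and d: "Y = tensor_eqv `` {d}" "d \<in> TF"
      by (metis quotientE)
    have "canon_rep R M B phi c = canon_rep R M B phi d" using eq c d by (simp add: canon_map_class)
    then have "(\<lambda>q. c q - d q) \<in> REL"
      using tensor_rel.diff[OF rel_basis_tensor_canon_rep[OF c(2)] rel_basis_tensor_canon_rep[OF d(2)]] by simp
    then show "X = Y" using tensor_eqv_class_eq_iff[OF c(2) d(2)] c(1) d(1) by simp
  qed
  show "canon_map R M B phi ` (TF // tensor_eqv) = hom_to_alg R M B phi"
  proof (intro equalityI subsetI)
    fix f assume "f \<in> canon_map R M B phi ` (TF // tensor_eqv)"
    then show "f \<in> hom_to_alg R M B phi"
      by (auto elim!: quotientE simp: canon_map_class canon_rep_in_hom_to_alg)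
  next
    fix f assume f: "f \<in> hom_to_alg R M B phi"
    then have c: "basis_tensor f \<in> TF" using hom_to_algD(2) e_closed by (intro basis_tensor_in_tensor_free) auto
    then have "canon_map R M B phi (tensor_eqv `` {basis_tensor f}) = f"
      by (simp add: canon_map_class canon_rep_basis_tensor[OF f])
    then show "f \<in> canon_map R M B phi ` (TF // tensor_eqv)" using quotientI[OF c, of tensor_eqv] by (metis rev_image_eqI)
  qed
qed

end

lemma (in module) canon_iso_if_dual_basis:
  assumes "dual_basis R M K w e" "cring B" "phi \<in> ring_hom R B"
  shows "canon_iso R M B phi"
proof -
  interpret dual_basis_setting R M B phi K w e
    using assms by (intro dual_basis_setting.intro tensor_setting.intro tensor_setting_axioms.intro
        dual_basis_setting_axioms.intro module_axioms)
  show ?thesis by (rule canon_iso)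
qed

section \<open>The trivial extension\<close>

text \<open>The trivial extension (idealization) R \<ltimes> M, in which M is an ideal of square zero.\<close>

definition trivial_ext :: "('r, 'c) ring_scheme \<Rightarrow> ('r, 'e, 'd) module_scheme \<Rightarrow> ('r \<times> 'e) ring" where
  "trivial_ext R M = \<lparr>carrier = carrier R \<times> carrier M,
     mult = (\<lambda>u v. (fst u \<otimes>\<^bsub>R\<^esub> fst v, fst u \<odot>\<^bsub>M\<^esub> snd v \<oplus>\<^bsub>M\<^esub> fst v \<odot>\<^bsub>M\<^esub> snd u)),
     one = (\<one>\<^bsub>R\<^esub>, \<zero>\<^bsub>M\<^esub>), zero = (\<zero>\<^bsub>R\<^esub>, \<zero>\<^bsub>M\<^esub>),
     add = (\<lambda>u v. (fst u \<oplus>\<^bsub>R\<^esub> fst v, snd u \<oplus>\<^bsub>M\<^esub> snd v))\<rparr>"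

context module
begin

abbreviation TE where "TE \<equiv> trivial_ext R M"

definition scalar_emb :: "'a \<Rightarrow> 'a \<times> 'c" where
  "scalar_emb a = (a, \<zero>\<^bsub>M\<^esub>)"

lemma trivial_ext_simps:
  "carrier TE = carrier R \<times> carrier M"
  "u \<otimes>\<^bsub>TE\<^esub> v = (fst u \<otimes> fst v, fst u \<odot>\<^bsub>M\<^esub> snd v \<oplus>\<^bsub>M\<^esub> fst v \<odot>\<^bsub>M\<^esub> snd u)"
  "u \<oplus>\<^bsub>TE\<^esub> v = (fst u \<oplus> fst v, snd u \<oplus>\<^bsub>M\<^esub> snd v)"
  "\<one>\<^bsub>TE\<^esub> = (\<one>, \<zero>\<^bsub>M\<^esub>)" "\<zero>\<^bsub>TE\<^esub> = (\<zero>, \<zero>\<^bsub>M\<^esub>)"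
  by (simp_all add: trivial_ext_def)

lemma trivial_ext_abelian_group: "abelian_group TE"
proof (rule abelian_groupI)
  fix u assume "u \<in> carrier TE"
  then show "\<exists>v\<in>carrier TE. v \<oplus>\<^bsub>TE\<^esub> u = \<zero>\<^bsub>TE\<^esub>"
    by (intro bexI[of _ "(\<ominus> fst u, \<ominus>\<^bsub>M\<^esub> snd u)"]) (auto simp: trivial_ext_simps R.l_neg M.l_neg)
qed (auto simp: trivial_ext_simps R.a_ac M.a_ac)

lemma trivial_ext_comm_monoid: "comm_monoid TE"
proof (rule comm_monoidI)
  fix u v w assume "u \<in> carrier TE" "v \<in> carrier TE" "w \<in> carrier TE"
  then obtain a x b y c z where uvw: "u = (a, x)" "v = (b, y)" "w = (c, z)"
    and h: "a \<in> carrier R" "b \<in> carrier R" "c \<in> carrier R" "x \<in> carrier M" "y \<in> carrier M" "z \<in> carrier M"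
    by (auto simp: trivial_ext_simps)
  have "(a \<otimes> b) \<odot>\<^bsub>M\<^esub> z \<oplus>\<^bsub>M\<^esub> c \<odot>\<^bsub>M\<^esub> (a \<odot>\<^bsub>M\<^esub> y \<oplus>\<^bsub>M\<^esub> b \<odot>\<^bsub>M\<^esub> x)
      = a \<odot>\<^bsub>M\<^esub> (b \<odot>\<^bsub>M\<^esub> z \<oplus>\<^bsub>M\<^esub> c \<odot>\<^bsub>M\<^esub> y) \<oplus>\<^bsub>M\<^esub> (b \<otimes> c) \<odot>\<^bsub>M\<^esub> x"
    using h by (simp add: smult_r_distr smult_assoc1[symmetric] R.m_comm R.m_lcomm M.a_ac)
  then show "u \<otimes>\<^bsub>TE\<^esub> v \<otimes>\<^bsub>TE\<^esub> w = u \<otimes>\<^bsub>TE\<^esub> (v \<otimes>\<^bsub>TE\<^esub> w)"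
    using uvw h by (simp add: trivial_ext_simps R.m_assoc)
qed (auto simp: trivial_ext_simps R.m_comm M.a_comm)

lemma trivial_ext_cring: "cring TE"
proof (rule cringI[OF trivial_ext_abelian_group trivial_ext_comm_monoid])
  fix u v w assume "u \<in> carrier TE" "v \<in> carrier TE" "w \<in> carrier TE"
  then show "(u \<oplus>\<^bsub>TE\<^esub> v) \<otimes>\<^bsub>TE\<^esub> w = u \<otimes>\<^bsub>TE\<^esub> w \<oplus>\<^bsub>TE\<^esub> v \<otimes>\<^bsub>TE\<^esub> w"
    by (auto simp: trivial_ext_simps R.l_distr smult_l_distr smult_r_distr M.a_ac)
qed

lemma scalar_emb_hom: "scalar_emb \<in> ring_hom R TE"
  by (rule ring_hom_memI) (simp_all add: scalar_emb_def trivial_ext_simps)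

lemma module_emb_hom: "restrict (\<lambda>x. (\<zero>, x)) (carrier M) \<in> hom_to_alg R M TE scalar_emb"
  unfolding hom_to_alg_def by (auto simp: trivial_ext_simps scalar_emb_def)

lemma snd_trivial_ext_finsum:
  assumes "finite S" "f \<in> S \<rightarrow> carrier TE"
  shows "snd (finsum TE f S) = (\<Oplus>\<^bsub>M\<^esub>p\<in>S. snd (f p))"
  by (rule additive_finsum)
     (use assms trivial_ext_abelian_group in \<open>auto simp: abelian_group_def trivial_ext_simps M.abelian_monoid_axioms\<close>)

lemma snd_trivial_ext_add_pow:
  assumes "v \<in> carrier TE"
  shows "snd (add_pow TE (n::int) v) = add_pow M n (snd v)"
proof -
  have "snd \<in> hom (add_monoid TE) (add_monoid M)" unfolding hom_def by (auto simp: trivial_ext_simps)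
  from hom_int_pow[OF this _ abelian_group.a_group[OF trivial_ext_abelian_group] M.a_group] assms
  show ?thesis unfolding add_pow_def by simp
qed

lemma add_pow_smult:
  assumes "a \<in> carrier R" "v \<in> carrier M"
  shows "add_pow M (n::int) (a \<odot>\<^bsub>M\<^esub> v) = add_pow R n a \<odot>\<^bsub>M\<^esub> v"
proof -
  have "(\<lambda>a. a \<odot>\<^bsub>M\<^esub> v) \<in> hom (add_monoid R) (add_monoid M)"
    unfolding hom_def using assms(2) by (auto simp: smult_l_distr)
  from hom_int_pow[OF this _ R.a_group M.a_group] assms show ?thesis unfolding add_pow_def by simp
qed

text \<open>If the inclusion x \<mapsto> (0, x) of M into R \<ltimes> M comes from an element c of M* \<otimes> (R \<ltimes> M),
  the second components of c provide a dual basis.\<close>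

lemma dual_basis_if_canon_rep_eq_emb:
  assumes c: "c \<in> tensor_free R M TE" and eq: "canon_rep R M TE scalar_emb c = restrict (\<lambda>x. (\<zero>, x)) (carrier M)"
  shows "dual_basis R M {p. c p \<noteq> 0} (\<lambda>p. restrict (\<lambda>x. add_pow R (c p) (fst p x)) (carrier M)) (\<lambda>p. snd (snd p))"
proof -
  interpret T: tensor_setting R M TE scalar_emb
    by (intro tensor_setting.intro tensor_setting_axioms.intro trivial_ext_cring scalar_emb_hom) unfold_locales
  define S where "S = {p. c p \<noteq> 0}"
  have S: "finite S" "S \<subseteq> dual_mod R M \<times> carrier TE" using c unfolding S_def T.tensor_free_iff by auto
  then have p: "fst p \<in> dual_mod R M" "fst (snd p) \<in> carrier R" "snd (snd p) \<in> carrier M" if "p \<in> S" for p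
    using that by (auto simp: trivial_ext_simps)
  have snd_pure: "snd (T.pure p x) = fst p x \<odot>\<^bsub>M\<^esub> snd (snd p)" if "p \<in> S" "x \<in> carrier M" for p x
    using p[OF that(1)] dual_modD(2)[of "fst p" x] that(2) by (simp add: trivial_ext_simps scalar_emb_def)
  show ?thesis unfolding dual_basis_def S_def[symmetric]
  proof (intro conjI ballI)
    show "finite S" by (rule S(1))
    fix p assume "p \<in> S"
    then show "restrict (\<lambda>x. add_pow R (c p) (fst p x)) (carrier M) \<in> dual_mod R M" "snd (snd p) \<in> carrier M"
      using p dual_mod_add_pow_closed by auto
  next
    fix x assume x: "x \<in> carrier M"
    have "x = snd (canon_rep R M TE scalar_emb c x)" using eq x by simp
    also have "canon_rep R M TE scalar_emb c x = finsum TE (\<lambda>p. add_pow TE (c p) (T.pure p x)) S"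
      unfolding canon_rep_def S_def using x by simp
    also have "snd \<dots> = (\<Oplus>\<^bsub>M\<^esub>p\<in>S. snd (add_pow TE (c p) (T.pure p x)))"
      using S x T.add_pow_pure_closed by (intro snd_trivial_ext_finsum) auto
    also have "\<dots> = (\<Oplus>\<^bsub>M\<^esub>p\<in>S. restrict (\<lambda>x. add_pow R (c p) (fst p x)) (carrier M) x \<odot>\<^bsub>M\<^esub> snd (snd p))"
    proof (rule M.finsum_cong'[OF refl])
      fix p assume pS: "p \<in> S"
      have px: "fst p x \<in> carrier R" using p(1)[OF pS] x by (rule dual_modD(2))
      have "T.pure p x \<in> carrier TE" using pS S(2) x by (intro T.pure_closed) auto
      then have "snd (add_pow TE (c p) (T.pure p x)) = add_pow M (c p) (fst p x \<odot>\<^bsub>M\<^esub> snd (snd p))"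
        by (simp add: snd_trivial_ext_add_pow snd_pure[OF pS x])
      also have "\<dots> = restrict (\<lambda>x. add_pow R (c p) (fst p x)) (carrier M) x \<odot>\<^bsub>M\<^esub> snd (snd p)"
        using add_pow_smult[OF px p(3)[OF pS]] x by simp
      finally show "snd (add_pow TE (c p) (T.pure p x)) = restrict (\<lambda>x. add_pow R (c p) (fst p x)) (carrier M) x \<odot>\<^bsub>M\<^esub> snd (snd p)" .
    qed (use p x dual_modD(2) in \<open>auto intro!: smult_closed\<close>)
    finally show "x = (\<Oplus>\<^bsub>M\<^esub>p\<in>S. restrict (\<lambda>x. add_pow R (c p) (fst p x)) (carrier M) x \<odot>\<^bsub>M\<^esub> snd (snd p))" .
  qed
qed

lemma dual_basis_if_canon_iso_trivial_ext:
  assumes "canon_iso R M TE scalar_emb"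
  shows "\<exists>(K :: (('c \<Rightarrow> 'a) \<times> 'a \<times> 'c) set) w e. dual_basis R M K w e"
proof -
  interpret T: tensor_setting R M TE scalar_emb
    by (intro tensor_setting.intro tensor_setting_axioms.intro trivial_ext_cring scalar_emb_hom) unfold_locales
  have "canon_map R M TE scalar_emb ` (T.TF // T.tensor_eqv) = hom_to_alg R M TE scalar_emb"
    using assms unfolding canon_iso_def bij_betw_def T.tensor_dual_eq_quotient by blast
  then have "restrict (\<lambda>x. (\<zero>, x)) (carrier M) \<in> canon_map R M TE scalar_emb ` (T.TF // T.tensor_eqv)"
    using module_emb_hom by simp
  then obtain X where X: "X \<in> T.TF // T.tensor_eqv" "restrict (\<lambda>x. (\<zero>, x)) (carrier M) = canon_map R M TE scalar_emb X"
    by (rule imageE)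
  from X(1) obtain c where c: "X = T.tensor_eqv `` {c}" "c \<in> T.TF" by (rule quotientE)
  have "canon_rep R M TE scalar_emb c = restrict (\<lambda>x. (\<zero>, x)) (carrier M)"
    using X(2) T.canon_map_class[OF c(2)] c(1) by simp
  with c(2) show ?thesis using dual_basis_if_canon_rep_eq_emb by blast
qed

end

theorem mainTheorem4:
  fixes R :: "'r ring" and E :: "('r, 'e) module"
  assumes "module R E"
  shows "(fin_type R E \<and> projective_mod R E \<longrightarrow>
            (\<forall>(B :: 'b ring) phi. cring B \<and> phi \<in> ring_hom R B \<longrightarrow> canon_iso R E B phi))
       \<and> ((\<forall>(B :: ('r \<times> 'e) ring) phi. cring B \<and> phi \<in> ring_hom R B \<longrightarrow> canon_iso R E B phi)
            \<longrightarrow> fin_type R E \<and> projective_mod R E)"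
proof -
  interpret E: module R E by (rule assms)
  have "canon_iso R E B phi"
    if "fin_type R E" "projective_mod R E" "cring B" "phi \<in> ring_hom R B" for B :: "'b ring" and phi
    using E.dual_basis_if_fin_type_projective[OF that(1,2)] E.canon_iso_if_dual_basis that(3,4) by blast
  moreover have "fin_type R E \<and> projective_mod R E" if "canon_iso R E (trivial_ext R E) E.scalar_emb"
    using E.dual_basis_if_canon_iso_trivial_ext[OF that] E.fin_type_projective_if_dual_basis by blast
  ultimately show ?thesis using E.trivial_ext_cring E.scalar_emb_hom by blast
qed

end
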